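(* Let $p$ be a prime, $s\ge1$, and let $F_{G(s)}(x,y)=\sum\alpha_{ij}x^iy^j$ be the formal group law over $\mathbb{Q}$ with logarithm $$x+\frac{x^{p^s}}{p}+\frac{x^{p^{2s}}}{p^2}+\frac{x^{p^{3s}}}{p^3}+\cdots.$$ Then for all $i,j\ge0$ with $i+j\ge1$, $$\alpha_{ij}=\sum_{\substack{(\nu_1,\nu_2,\dots)\\ \sum_{r\ge1}(p^{rs}-1)\nu_r=i+j-1}}\ \sum_{\substack{i_0+\sum_{r\ge1}p^{rs}i_r=i\\ j_0+\sum_{r\ge1}p^{rs}j_r=j\\ i_r+j_r+k_r=\nu_r\ (r\ge1)}}(-1)^{\sum_r k_r}\frac{\bigl(i_0+j_0+\sum_{r\ge1}(i_r+j_r+k_r)-1\bigr)!}{i_0!\,j_0!\,\prod_{r\ge1}i_r!\,j_r!\,k_r!\ \cdot\ p^{\sum_{r\ge1}r\nu_r}},$$ all indices ranging over nonnegative integers (finitely many nonzero). In particular $\alpha_{ij}=0$ unless $p^s-1$ divides $i+j-1$.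
   Context: This is the formal group law of the theory $G(s)$, obtained from Brown–Peterson cohomology $BP$ (coefficients $\mathbb{Z}_{(p)}[v_1,v_2,\dots]$, Hazewinkel generators) by setting $v_i=0$ for all $i\ge1$, $i\ne s$, and then setting $v_s=1$. *)

theory Defs
  imports Complex_Main "HOL-Computational_Algebra.Formal_Power_Series" "HOL-Computational_Algebra.Primes"
begin

text \<open>A bivariate power series sum alpha_ij x^i y^j over the rationals is encoded as an
  element of (rat fps) fps: the outer variable is y, the inner variable is x.\<close>
definition biv :: "(nat \<Rightarrow> nat \<Rightarrow> rat) \<Rightarrow> rat fps fps" where
  "biv \<alpha> = Abs_fps (\<lambda>j. Abs_fps (\<lambda>i. \<alpha> i j))"

definition glog_coeff :: "nat \<Rightarrow> nat \<Rightarrow> nat \<Rightarrow> rat" where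
  "glog_coeff p s n = (if \<exists>k. n = p ^ (k * s)
      then 1 / of_nat p ^ (THE k. n = p ^ (k * s)) else 0)"

text \<open>Coefficient of x^i y^j in the composite f(F(x,y)) of a univariate series with
  coefficients f and a bivariate series F with coefficients alpha, where alpha 0 0 = 0
  (so only powers F^n with n <= i+j contribute).\<close>
definition comp_biv :: "(nat \<Rightarrow> rat) \<Rightarrow> (nat \<Rightarrow> nat \<Rightarrow> rat) \<Rightarrow> nat \<Rightarrow> nat \<Rightarrow> rat" where
  "comp_biv f \<alpha> i j = (\<Sum>n\<in>{0..i+j}. f n * fps_nth (fps_nth (biv \<alpha> ^ n) j) i)"

text \<open>alpha is (the coefficient array of) the formal group law with logarithm f:
  F(0,0) = 0 and f(F(x,y)) = f(x) + f(y).\<close>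
definition fgl_with_log :: "(nat \<Rightarrow> rat) \<Rightarrow> (nat \<Rightarrow> nat \<Rightarrow> rat) \<Rightarrow> bool" where
  "fgl_with_log f \<alpha> \<longleftrightarrow> \<alpha> 0 0 = 0 \<and>
     (\<forall>i j. comp_biv f \<alpha> i j = (if j = 0 then f i else 0) + (if i = 0 then f j else 0))"

definition nu_set :: "nat \<Rightarrow> nat \<Rightarrow> nat \<Rightarrow> (nat \<Rightarrow> nat) set" where
  "nu_set p s m = {\<nu>. \<nu> 0 = 0 \<and> finite {r. \<nu> r \<noteq> 0} \<and>
      (\<Sum>r\<in>{r. \<nu> r \<noteq> 0}. (p ^ (r * s) - 1) * \<nu> r) = m}"

text \<open>Index tuples (i_0, i_1, ...), (j_0, j_1, ...), (k_1, k_2, ...) (k_0 := 0) with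
  i_0 + sum p^(rs) i_r = i, j_0 + sum p^(rs) j_r = j, i_r + j_r + k_r = nu_r (r >= 1).\<close>
definition idx_set :: "nat \<Rightarrow> nat \<Rightarrow> (nat \<Rightarrow> nat) \<Rightarrow> nat \<Rightarrow> nat
    \<Rightarrow> ((nat \<Rightarrow> nat) \<times> (nat \<Rightarrow> nat) \<times> (nat \<Rightarrow> nat)) set" where
  "idx_set p s \<nu> i j = {(a, b, c). c 0 = 0 \<and> (\<forall>r\<ge>1. a r + b r + c r = \<nu> r) \<and>
      a 0 + (\<Sum>r\<in>{r. \<nu> r \<noteq> 0}. p ^ (r * s) * a r) = i \<and>
      b 0 + (\<Sum>r\<in>{r. \<nu> r \<noteq> 0}. p ^ (r * s) * b r) = j}"

definition term_G :: "nat \<Rightarrow> (nat \<Rightarrow> nat) \<Rightarrow> (nat \<Rightarrow> nat) \<Rightarrow> (nat \<Rightarrow> nat) \<Rightarrow> (nat \<Rightarrow> nat) \<Rightarrow> rat" where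
  "term_G p \<nu> a b c = (let S = {r. \<nu> r \<noteq> 0} in
     (-1) ^ (\<Sum>r\<in>S. c r) *
     of_nat (fact (a 0 + b 0 + (\<Sum>r\<in>S. a r + b r + c r) - 1)) /
     (of_nat (fact (a 0) * fact (b 0) * (\<Prod>r\<in>S. fact (a r) * fact (b r) * fact (c r)))
       * of_nat p ^ (\<Sum>r\<in>S. r * \<nu> r)))"

definition alpha_formula :: "nat \<Rightarrow> nat \<Rightarrow> nat \<Rightarrow> nat \<Rightarrow> rat" where
  "alpha_formula p s i j =
     (\<Sum>\<nu>\<in>nu_set p s (i + j - 1). \<Sum>(a, b, c)\<in>idx_set p s \<nu> i j. term_G p \<nu> a b c)"

end

theory Submission
  imports Defs
begin

text \<open>Let \<open>g(w) = \<Sum>\<^sub>r w\<^sup>q\<^sup>\<^sub>r / p\<^sup>r\<close> with \<open>q\<^sub>r = p\<^sup>r\<^sup>s\<close>. Since \<open>g(w) = w + \<dots>\<close>, the equation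
  \<open>g(F(x,y)) = g(x) + g(y)\<close> determines \<open>F\<close> degree by degree, so it suffices to show that the series
  with the claimed coefficients satisfies it. Up to total degree \<open>M\<close> this equation says
  \<open>F = \<phi>(F)\<close> for \<open>\<phi>(w) = \<Sum>\<^sub>r\<^sub>\<le>\<^sub>M p\<^sup>-\<^sup>r (x\<^sup>q\<^sup>\<^sub>r + y\<^sup>q\<^sup>\<^sub>r - [r \<ge> 1] w\<^sup>q\<^sup>\<^sub>r)\<close>. With a marker variable \<open>t\<close>,
  the equation \<open>W = t \<phi>(W)\<close> is solved by Lagrange inversion,
  \<open>(n+1) [t\<^sup>n\<^sup>+\<^sup>1] W = [w\<^sup>n] \<phi>\<^sup>n\<^sup>+\<^sup>1\<close>, and expanding \<open>\<phi>\<^sup>n\<^sup>+\<^sup>1\<close> by the multinomial theorem produces exactly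
  the terms of the closed formula: \<open>i\<^sub>r, j\<^sub>r, k\<^sub>r\<close> count how often \<open>x\<^sup>q\<^sup>\<^sub>r, y\<^sup>q\<^sup>\<^sub>r, w\<^sup>q\<^sup>\<^sub>r\<close> are chosen.
  Each chosen \<open>w\<^sup>q\<^sup>\<^sub>r\<close> raises the \<open>w\<close>-degree by \<open>q\<^sub>r \<ge> 2\<close>, so a monomial \<open>x\<^sup>i y\<^sup>j t\<^sup>N\<close> of \<open>W\<close>
  has \<open>N < 2(i+j)\<close>; hence \<open>t = 1\<close> may be substituted and yields \<open>F\<close>. Finally every term has
  \<open>\<Sum> (q\<^sub>r - 1) \<nu>\<^sub>r = i + j - 1\<close>, and \<open>p\<^sup>s - 1\<close> divides each \<open>q\<^sub>r - 1\<close>.\<close>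

unbundle fps_syntax

section \<open>Lagrange inversion\<close>

definition lagrange_diag :: "'a::comm_ring_1 fps \<Rightarrow> 'a fps \<Rightarrow> 'a fps" where
  "lagrange_diag \<phi> G = Abs_fps (\<lambda>n. (G * \<phi> ^ n) $ n)"

lemma lagrange_diag_add: "lagrange_diag \<phi> (G + H) = lagrange_diag \<phi> G + lagrange_diag \<phi> H"
  by (simp add: lagrange_diag_def fps_eq_iff distrib_right)

lemma lagrange_diag_const_mult:
  "lagrange_diag \<phi> (fps_const c * G) = fps_const c * lagrange_diag \<phi> G"
  by (simp add: lagrange_diag_def fps_eq_iff mult.assoc)

lemma lagrange_diag_X_mult: "lagrange_diag \<phi> (fps_X * H) = fps_X * lagrange_diag \<phi> (\<phi> * H)"
proof (rule fps_ext)
  fix n show "lagrange_diag \<phi> (fps_X * H) $ n = (fps_X * lagrange_diag \<phi> (\<phi> * H)) $ n"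
  proof (cases n)
    case (Suc k)
    have "(fps_X * H * \<phi> ^ n) $ n = (\<phi> * H * \<phi> ^ k) $ k"
      using Suc by (simp add: algebra_simps)
    then show ?thesis using Suc by (simp add: lagrange_diag_def)
  qed (simp add: lagrange_diag_def)
qed

lemma lagrange_diag_one:
  fixes \<phi> :: "'a::{idom,semiring_char_0} fps"
  shows "lagrange_diag \<phi> 1 = 1 + fps_X * lagrange_diag \<phi> (fps_deriv \<phi>)"
proof (rule fps_ext)
  fix n show "lagrange_diag \<phi> 1 $ n = (1 + fps_X * lagrange_diag \<phi> (fps_deriv \<phi>)) $ n"
  proof (cases n)
    case (Suc k)
    have "of_nat (Suc k) * (\<phi> ^ Suc k) $ Suc k = fps_deriv (\<phi> ^ Suc k) $ k"
      by (simp del: of_nat_Suc power_Suc)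
    also have "\<dots> = of_nat (Suc k) * (fps_deriv \<phi> * \<phi> ^ k) $ k"
      by (subst fps_deriv_power') (simp add: fps_of_nat mult.assoc del: of_nat_Suc power_Suc)
    finally have "(\<phi> ^ Suc k) $ Suc k = (fps_deriv \<phi> * \<phi> ^ k) $ k"
      using of_nat_neq_0 mult_left_cancel by blast
    then show ?thesis using Suc by (simp add: lagrange_diag_def del: power_Suc)
  qed (simp add: lagrange_diag_def)
qed

text \<open>The defect of this identity is
  additive, and splitting \<open>G = G\<^sub>0 + z H\<close> expresses its coefficient at \<open>z\<^sup>n\<^sup>+\<^sup>1\<close> through the
  coefficient at \<open>z\<^sup>n\<close> of defects of other series.\<close>
lemma lagrange_diag_mult_eq_compose:
  fixes \<phi> W :: "'a::{idom,semiring_char_0} fps"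
  assumes W0: "W $ 0 = 0" and W: "W = fps_X * (\<phi> oo W)"
  shows "lagrange_diag \<phi> G * (1 - fps_X * (fps_deriv \<phi> oo W)) = G oo W"
proof -
  define D where "D G = lagrange_diag \<phi> G * (1 - fps_X * (fps_deriv \<phi> oo W)) - (G oo W)" for G
  have add: "D (G + H) = D G + D H" for G H
    by (simp add: D_def lagrange_diag_add fps_compose_add_distrib algebra_simps)
  have const: "D (fps_const c) = fps_const c * D 1" for c
    using lagrange_diag_const_mult[of \<phi> c 1] by (simp add: D_def algebra_simps)
  have X_mult: "D (fps_X * H) = fps_X * D (\<phi> * H)" for H
  proof -
    have "(fps_X * H) oo W = W * (H oo W)"
      by (simp add: fps_compose_mult_distrib[OF W0] W0)
    also have "\<dots> = fps_X * ((\<phi> * H) oo W)"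
      by (subst W) (simp add: fps_compose_mult_distrib[OF W0] mult.assoc)
    finally show ?thesis by (simp add: D_def lagrange_diag_X_mult algebra_simps)
  qed
  have one: "D 1 = fps_X * D (fps_deriv \<phi>)"
    by (simp add: D_def lagrange_diag_one algebra_simps)
  have "D G $ n = 0" for n
  proof (induction n arbitrary: G)
    case 0
    then show ?case by (simp add: D_def lagrange_diag_def)
  next
    case (Suc n)
    define H where "H = Abs_fps (\<lambda>n. G $ Suc n)"
    have "G = fps_const (G $ 0) + fps_X * H"
      by (rule fps_ext) (simp add: H_def split: nat.split)
    then have "D G = fps_const (G $ 0) * (fps_X * D (fps_deriv \<phi>)) + fps_X * D (\<phi> * H)"
      by (metis add const one X_mult)
    then show ?case using Suc by simp
  qed
  then show ?thesis by (simp add: D_def fps_eq_iff)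
qed

theorem lagrange_inversion:
  fixes \<phi> W :: "'a::{idom,semiring_char_0} fps"
  assumes W0: "W $ 0 = 0" and W: "W = fps_X * (\<phi> oo W)"
  shows "of_nat (Suc n) * W $ Suc n = (\<phi> ^ Suc n) $ n"
proof -
  define Q where "Q = 1 - fps_X * (fps_deriv \<phi> oo W)"
  have "fps_deriv W = (\<phi> oo W) + fps_X * ((fps_deriv \<phi> oo W) * fps_deriv W)"
    by (subst W) (simp add: fps_compose_deriv[OF W0])
  then have "fps_deriv W * Q = \<phi> oo W"
    by (simp add: Q_def algebra_simps)
  also have "\<dots> = lagrange_diag \<phi> \<phi> * Q"
    unfolding Q_def by (rule lagrange_diag_mult_eq_compose[OF W0 W, symmetric])
  finally have "fps_deriv W = lagrange_diag \<phi> \<phi>"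
    by (rule mult_right_cancel[THEN iffD1, rotated]) (simp add: Q_def fps_eq_iff exI[of _ 0])
  then have "fps_deriv W $ n = lagrange_diag \<phi> \<phi> $ n" by simp
  then show ?thesis by (simp add: lagrange_diag_def mult.commute)
qed

definition fps_agree_upto :: "nat \<Rightarrow> 'a fps \<Rightarrow> 'a fps \<Rightarrow> bool" where
  "fps_agree_upto n A B \<longleftrightarrow> (\<forall>m\<le>n. A $ m = B $ m)"

lemma fps_agree_upto_mult:
  fixes A B C :: "'a::comm_ring_1 fps"
  assumes "fps_agree_upto n A B" shows "fps_agree_upto n (A * C) (B * C)"
  using assms unfolding fps_agree_upto_def by (auto simp: fps_mult_nth intro!: sum.cong)

lemma fps_agree_upto_power:
  fixes A B :: "'a::comm_ring_1 fps"
  assumes "fps_agree_upto n A B" shows "fps_agree_upto n (A ^ k) (B ^ k)"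
proof (induction k)
  case (Suc k)
  have "fps_agree_upto n (A * A ^ k) (B * A ^ k)" by (rule fps_agree_upto_mult[OF assms])
  moreover have "fps_agree_upto n (A ^ k * B) (B ^ k * B)" by (rule fps_agree_upto_mult[OF Suc.IH])
  ultimately show ?case by (simp add: fps_agree_upto_def mult.commute)
qed (simp add: fps_agree_upto_def)

lemma fps_agree_upto_compose:
  fixes A B :: "'a::comm_ring_1 fps"
  assumes "fps_agree_upto n A B" shows "fps_agree_upto n (\<phi> oo A) (\<phi> oo B)"
  using fps_agree_upto_power[OF assms] unfolding fps_agree_upto_def
  by (auto simp: fps_compose_nth intro!: sum.cong)

primrec fixed_point_iter :: "'a::comm_ring_1 fps \<Rightarrow> nat \<Rightarrow> 'a fps" where
  "fixed_point_iter \<phi> 0 = 0"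
| "fixed_point_iter \<phi> (Suc k) = fps_X * (\<phi> oo fixed_point_iter \<phi> k)"

lemma fixed_point_iter_agree:
  "fps_agree_upto k (fixed_point_iter \<phi> (Suc k)) (fixed_point_iter \<phi> k)"
proof (induction k)
  case (Suc k)
  then have "fps_agree_upto k (\<phi> oo fixed_point_iter \<phi> (Suc k)) (\<phi> oo fixed_point_iter \<phi> k)"
    by (rule fps_agree_upto_compose)
  then show ?case by (auto simp: fps_agree_upto_def le_Suc_eq)
qed (simp add: fps_agree_upto_def)

lemma fixed_point_iter_stable:
  "k \<ge> Suc m \<Longrightarrow> fixed_point_iter \<phi> k $ m = fixed_point_iter \<phi> (Suc m) $ m"
proof (induction k rule: dec_induct)
  case (step k)
  then show ?case using fixed_point_iter_agree[of k \<phi>] by (simp add: fps_agree_upto_def)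
qed simp

lemma fixed_point_exists:
  fixes \<phi> :: "'a::comm_ring_1 fps"
  obtains W where "W $ 0 = 0" and "W = fps_X * (\<phi> oo W)"
proof
  define W where "W = Abs_fps (\<lambda>n. fixed_point_iter \<phi> (Suc n) $ n)"
  have agree: "fps_agree_upto n W (fixed_point_iter \<phi> (Suc n))" for n
    using fixed_point_iter_stable[of _ "Suc n" \<phi>] by (simp add: fps_agree_upto_def W_def)
  show "W $ 0 = 0" by (simp add: W_def)
  show "W = fps_X * (\<phi> oo W)"
  proof (rule fps_ext)
    fix n show "W $ n = (fps_X * (\<phi> oo W)) $ n"
    proof (cases n)
      case (Suc k)
      have "(\<phi> oo W) $ k = (\<phi> oo fixed_point_iter \<phi> (Suc k)) $ k"
        using fps_agree_upto_compose[OF agree[of k]] by (simp add: fps_agree_upto_def)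
      then show ?thesis using Suc by (simp add: W_def)
    qed (simp add: W_def)
  qed
qed

section \<open>The multinomial theorem\<close>

definition weak_compositions :: "'l set \<Rightarrow> nat \<Rightarrow> ('l \<Rightarrow> nat) set" where
  "weak_compositions L n = {m. (\<forall>l. l \<notin> L \<longrightarrow> m l = 0) \<and> (\<Sum>l\<in>L. m l) = n}"

definition multinomial_coeff :: "'l set \<Rightarrow> ('l \<Rightarrow> nat) \<Rightarrow> nat" where
  "multinomial_coeff L m = fact (\<Sum>l\<in>L. m l) div (\<Prod>l\<in>L. fact (m l))"

lemma finite_weak_compositions:
  assumes "finite L" shows "finite (weak_compositions L n)"
proof (rule finite_subset)
  show "weak_compositions L n \<subseteq> {m. \<forall>x. (x \<in> L \<longrightarrow> m x \<in> {..n}) \<and> (x \<notin> L \<longrightarrow> m x = 0)}"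
    using member_le_sum[OF _ _ assms] by (fastforce simp: weak_compositions_def)
  show "finite {m. \<forall>x. (x \<in> L \<longrightarrow> m x \<in> {..n}) \<and> (x \<notin> L \<longrightarrow> m x = (0::nat))}"
    by (rule finite_set_of_finite_funs) (use assms in auto)
qed

lemma prod_fact_dvd_fact_sum:
  assumes "finite L" shows "(\<Prod>l\<in>L. fact (m l)) dvd (fact (\<Sum>l\<in>L. m l) :: nat)"
  using assms
proof (induction L rule: finite_induct)
  case (insert a L)
  then have "(\<Prod>l\<in>insert a L. fact (m l)) dvd fact (m a) * (fact (\<Sum>l\<in>L. m l) :: nat)"
    by simp
  also have "\<dots> dvd fact (\<Sum>l\<in>insert a L. m l)"
    using fact_fact_dvd_fact[of "m a"] insert.hyps by simp
  finally show ?case .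
qed simp

lemma multinomial_coeff_mult_prod_fact:
  assumes "finite L"
  shows "multinomial_coeff L m * (\<Prod>l\<in>L. fact (m l)) = fact (\<Sum>l\<in>L. m l)"
  using prod_fact_dvd_fact_sum[OF assms] by (simp add: multinomial_coeff_def)

lemma of_nat_multinomial_coeff:
  assumes "finite L"
  shows "(of_nat (multinomial_coeff L m) :: 'a::field_char_0) =
    fact (\<Sum>l\<in>L. m l) / of_nat (\<Prod>l\<in>L. fact (m l))"
proof (rule eq_divide_imp)
  show "of_nat (\<Prod>l\<in>L. fact (m l)) \<noteq> (0 :: 'a)"
    using assms by simp
  show "of_nat (multinomial_coeff L m) * of_nat (\<Prod>l\<in>L. fact (m l)) = (fact (\<Sum>l\<in>L. m l) :: 'a)"
    by (metis multinomial_coeff_mult_prod_fact[OF assms] of_nat_fact of_nat_mult)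
qed

lemma binomial_mult_multinomial_coeff:
  assumes "finite L" "a \<notin> L" "k \<le> n" "(\<Sum>l\<in>L. m l) = n - k"
  shows "(n choose k) * multinomial_coeff L m = multinomial_coeff (insert a L) (m(a := k))"
proof -
  have "(\<Sum>l\<in>L. (m(a := k)) l) = (\<Sum>l\<in>L. m l)"
    and "(\<Prod>l\<in>L. fact ((m(a := k)) l)) = (\<Prod>l\<in>L. fact (m l) :: nat)"
    using assms(2) by (auto intro!: sum.cong prod.cong)
  then have sum: "(\<Sum>l\<in>insert a L. (m(a := k)) l) = n" and
    prod: "(\<Prod>l\<in>insert a L. fact ((m(a := k)) l)) = fact k * (\<Prod>l\<in>L. fact (m l) :: nat)"
    using assms by simp_all
  have "(n choose k) * multinomial_coeff L m * (fact k * (\<Prod>l\<in>L. fact (m l))) =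
        fact k * fact (n - k) * (n choose k)"
    using multinomial_coeff_mult_prod_fact[OF assms(1), of m] assms(4) by (simp add: ac_simps)
  also have "\<dots> = multinomial_coeff (insert a L) (m(a := k)) * (fact k * (\<Prod>l\<in>L. fact (m l)))"
    using multinomial_coeff_mult_prod_fact[of "insert a L" "m(a := k)"] assms(1,3) sum prod
    by (simp add: binomial_fact_lemma)
  finally show ?thesis using assms(1) by simp
qed

theorem multinomial_theorem:
  fixes u :: "'l \<Rightarrow> 'a::comm_semiring_1"
  assumes "finite L"
  shows "(\<Sum>l\<in>L. u l) ^ n =
    (\<Sum>m\<in>weak_compositions L n. of_nat (multinomial_coeff L m) * (\<Prod>l\<in>L. u l ^ m l))"
  using assms
proof (induction L arbitrary: n rule: finite_induct)
  case empty
  have empty: "weak_compositions {} n = (if n = 0 then {\<lambda>_. 0} else {})"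
    by (auto simp: weak_compositions_def)
  show ?case unfolding empty by (simp add: multinomial_coeff_def zero_power)
next
  case (insert a L)
  let ?P = "\<lambda>m. \<Prod>l\<in>L. u l ^ m l"
  let ?c = "\<lambda>k m. of_nat ((n choose k) * multinomial_coeff L m) * u a ^ k * ?P m"
  have "(\<Sum>l\<in>insert a L. u l) ^ n = (\<Sum>k\<le>n. of_nat (n choose k) * u a ^ k * (\<Sum>l\<in>L. u l) ^ (n - k))"
    using insert.hyps by (simp add: binomial_ring)
  also have "\<dots> = (\<Sum>k\<le>n. \<Sum>m\<in>weak_compositions L (n - k). ?c k m)"
    by (simp add: insert.IH sum_distrib_left mult_ac)
  also have "\<dots> = (\<Sum>(k, m)\<in>Sigma {..n} (\<lambda>k. weak_compositions L (n - k)). ?c k m)"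
    by (rule sum.Sigma) (auto intro: finite_weak_compositions insert.hyps)
  also have "\<dots> = (\<Sum>m\<in>weak_compositions (insert a L) n.
                    of_nat (multinomial_coeff (insert a L) m) * (\<Prod>l\<in>insert a L. u l ^ m l))"
  proof (rule sum.reindex_bij_witness[where i = "\<lambda>m. (m a, m(a := 0))" and j = "\<lambda>(k, m). m(a := k)"])
    fix km assume "km \<in> Sigma {..n} (\<lambda>k. weak_compositions L (n - k))"
    then obtain k m where km: "km = (k, m)" "k \<le> n" "m \<in> weak_compositions L (n - k)"
      by auto
    then have ma: "m a = 0" and sum: "(\<Sum>l\<in>L. m l) = n - k"
      using insert.hyps by (auto simp: weak_compositions_def)
    have sum_upd: "(\<Sum>l\<in>L. (m(a := k)) l) = (\<Sum>l\<in>L. m l)"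
      and prod_upd: "(\<Prod>l\<in>L. u l ^ (m(a := k)) l) = ?P m"
      using insert.hyps by (auto intro!: sum.cong prod.cong)
    show "(case km of (k, m) \<Rightarrow> m(a := k)) \<in> weak_compositions (insert a L) n"
      using km sum sum_upd insert.hyps by (auto simp: weak_compositions_def)
    show "(\<lambda>m. (m a, m(a := 0))) (case km of (k, m) \<Rightarrow> m(a := k)) = km"
      using km ma by auto
    show "of_nat (multinomial_coeff (insert a L) (case km of (k, m) \<Rightarrow> m(a := k))) *
        (\<Prod>l\<in>insert a L. u l ^ (case km of (k, m) \<Rightarrow> m(a := k)) l) = (case km of (k, m) \<Rightarrow> ?c k m)"
      using km insert.hyps prod_upd binomial_mult_multinomial_coeff[OF insert.hyps(1,2) km(2) sum]
      by (simp flip: of_nat_mult add: mult.assoc)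
  next
    fix m assume m: "m \<in> weak_compositions (insert a L) n"
    have "(\<Sum>l\<in>L. (m(a := 0)) l) = (\<Sum>l\<in>L. m l)"
      using insert.hyps by (intro sum.cong) auto
    moreover have "m a + (\<Sum>l\<in>L. m l) = n"
      using m insert.hyps by (simp add: weak_compositions_def)
    ultimately show "(m a, m(a := 0)) \<in> Sigma {..n} (\<lambda>k. weak_compositions L (n - k))"
      and "(\<lambda>(k, m). m(a := k)) (m a, m(a := 0)) = m"
      using m by (auto simp: weak_compositions_def)
  qed
  finally show ?case .
qed

section \<open>Bivariate power series\<close>

definition bcoeff :: "'a fps fps \<Rightarrow> nat \<Rightarrow> nat \<Rightarrow> 'a" where
  "bcoeff A i j = A $ j $ i"

definition bmonom :: "'a::comm_semiring_1 \<Rightarrow> nat \<Rightarrow> nat \<Rightarrow> 'a fps fps" where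
  "bmonom c a b = fps_const (fps_const c * fps_X ^ a) * fps_X ^ b"

lemma bcoeff_biv [simp]: "bcoeff (biv \<alpha>) i j = \<alpha> i j"
  by (simp add: bcoeff_def biv_def)

lemma bcoeff_add [simp]: "bcoeff (A + B) i j = bcoeff A i j + bcoeff B i j"
  by (simp add: bcoeff_def)

lemma bcoeff_0 [simp]: "bcoeff 0 i j = 0"
  by (simp add: bcoeff_def)

lemma bcoeff_sum: "bcoeff (sum f S) i j = (\<Sum>x\<in>S. bcoeff (f x) i j)"
  by (induction S rule: infinite_finite_induct) auto

lemma bcoeff_ext: "(\<And>i j. bcoeff A i j = bcoeff B i j) \<Longrightarrow> A = B"
  by (simp add: bcoeff_def fps_eq_iff)

lemma bcoeff_mult:
  "bcoeff (A * B) i j = (\<Sum>j1\<le>j. \<Sum>i1\<le>i. bcoeff A i1 j1 * bcoeff B (i - i1) (j - j1))"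
  by (simp add: bcoeff_def fps_mult_nth fps_sum_nth atLeast0AtMost)

lemma bcoeff_bmonom: "bcoeff (bmonom c a b) i j = (if i = a \<and> j = b then c else 0)"
  by (simp add: bcoeff_def bmonom_def)

lemma bcoeff_const_mult:
  fixes c :: "'a::comm_semiring_1"
  shows "bcoeff (fps_const (fps_const c) * A) i j = c * bcoeff A i j"
  by (simp add: bcoeff_def)

lemma bmonom_0_0: "bmonom c 0 0 = fps_const (fps_const c)"
  by (simp add: bmonom_def)

lemma bcoeff_of_nat_mult:
  fixes A :: "'a::comm_semiring_1 fps fps"
  shows "bcoeff (of_nat k * A) i j = of_nat k * bcoeff A i j"
  by (simp add: bcoeff_const_mult flip: fps_of_nat)

lemma bmonom_mult: "bmonom c a b * bmonom d a' b' = bmonom (c * d) (a + a') (b + b')"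
  by (simp add: bmonom_def power_add mult_ac flip: fps_const_mult)

lemma bmonom_1: "bmonom 1 0 0 = 1"
  by (simp add: bmonom_def)

definition vanishes_below :: "'a::zero fps fps \<Rightarrow> nat \<Rightarrow> bool" where
  "vanishes_below A d \<longleftrightarrow> (\<forall>i j. i + j < d \<longrightarrow> bcoeff A i j = 0)"

lemma vanishes_below_mult:
  fixes A B :: "'a::comm_semiring_1 fps fps"
  assumes "vanishes_below A a" "vanishes_below B b"
  shows "vanishes_below (A * B) (a + b)"
  unfolding vanishes_below_def
proof (intro allI impI)
  fix i j assume ij: "i + j < a + b"
  show "bcoeff (A * B) i j = 0" unfolding bcoeff_mult
  proof (intro sum.neutral ballI)
    fix j1 i1 assume "j1 \<in> {..j}" "i1 \<in> {..i}"
    then show "bcoeff A i1 j1 * bcoeff B (i - i1) (j - j1) = 0"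
      using assms ij unfolding vanishes_below_def by (cases "i1 + j1 < a") auto
  qed
qed

lemma vanishes_below_power:
  fixes A :: "'a::comm_semiring_1 fps fps"
  assumes "bcoeff A 0 0 = 0" shows "vanishes_below (A ^ n) n"
proof (induction n)
  case (Suc n)
  have "vanishes_below A 1" using assms by (auto simp: vanishes_below_def)
  from vanishes_below_mult[OF this Suc.IH] show ?case by simp
qed (simp add: vanishes_below_def)

definition agree_on_box :: "nat \<Rightarrow> nat \<Rightarrow> 'a fps fps \<Rightarrow> 'a fps fps \<Rightarrow> bool" where
  "agree_on_box i j A B \<longleftrightarrow> (\<forall>i'\<le>i. \<forall>j'\<le>j. bcoeff A i' j' = bcoeff B i' j')"

lemma agree_on_box_mult:
  fixes A B C D :: "'a::comm_semiring_1 fps fps"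
  assumes "agree_on_box i j A B" "agree_on_box i j C D"
  shows "agree_on_box i j (A * C) (B * D)"
  using assms unfolding agree_on_box_def bcoeff_mult by (auto intro!: sum.cong)

lemma agree_on_box_power:
  fixes A B :: "'a::comm_semiring_1 fps fps"
  assumes "agree_on_box i j A B" shows "agree_on_box i j (A ^ n) (B ^ n)"
proof (induction n)
  case (Suc n)
  show ?case using agree_on_box_mult[OF assms Suc.IH] by simp
qed (simp add: agree_on_box_def)

lemma bcoeff_power_lower_degree:
  fixes A B :: "'a::comm_semiring_1 fps fps"
  assumes A0: "bcoeff A 0 0 = 0" and B0: "bcoeff B 0 0 = 0"
    and lower: "\<And>i' j'. i' + j' < i + j \<Longrightarrow> bcoeff A i' j' = bcoeff B i' j'"
    and "n \<noteq> 1"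
  shows "bcoeff (A ^ n) i j = bcoeff (B ^ n) i j"
proof (cases n)
  case (Suc k)
  with \<open>n \<noteq> 1\<close> have "k \<ge> 1" by simp
  then have Ak: "bcoeff (A ^ k) 0 0 = 0" and Bk: "bcoeff (B ^ k) 0 0 = 0"
    using vanishes_below_power[OF A0, of k] vanishes_below_power[OF B0, of k]
    by (auto simp: vanishes_below_def)
  have "bcoeff (A * A ^ k) i j = bcoeff (B * B ^ k) i j"
    unfolding bcoeff_mult
  proof (intro sum.cong refl)
    fix j1 i1 assume j1: "j1 \<in> {..j}" and i1: "i1 \<in> {..i}"
    show "bcoeff A i1 j1 * bcoeff (A ^ k) (i - i1) (j - j1) =
          bcoeff B i1 j1 * bcoeff (B ^ k) (i - i1) (j - j1)"
    proof (cases "i1 + j1 = 0 \<or> (i1 = i \<and> j1 = j)")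
      case True
      then show ?thesis using A0 B0 Ak Bk by auto
    next
      case False
      then have "i1 + j1 < i + j" using i1 j1 by auto
      have "agree_on_box (i - i1) (j - j1) A B"
        using False i1 j1 lower unfolding agree_on_box_def by auto
      then have "agree_on_box (i - i1) (j - j1) (A ^ k) (B ^ k)"
        by (rule agree_on_box_power)
      then show ?thesis
        using lower[OF \<open>i1 + j1 < i + j\<close>] by (simp add: agree_on_box_def)
    qed
  qed
  then show ?thesis by (simp add: Suc)
qed simp

text \<open>Comparing coefficients of \<open>x\<^sup>i y\<^sup>j\<close> in \<open>f(F(x,y)) = f(x) + f(y)\<close> determines \<open>f\<^sub>1 \<alpha>\<^sub>i\<^sub>j\<close>
  from coefficients of lower total degree.\<close>
lemma fgl_with_log_unique:
  assumes \<alpha>: "fgl_with_log f \<alpha>" and \<beta>: "fgl_with_log f \<beta>" and f1: "f 1 \<noteq> 0"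
  shows "\<alpha> = \<beta>"
proof -
  have \<alpha>0: "\<alpha> 0 0 = 0" and \<beta>0: "\<beta> 0 0 = 0"
    using \<alpha> \<beta> by (auto simp: fgl_with_log_def)
  have "\<forall>i j. i + j = d \<longrightarrow> \<alpha> i j = \<beta> i j" for d
  proof (induction d rule: less_induct)
    case (less d)
    show ?case
    proof (intro allI impI)
      fix i j assume d: "i + j = d"
      show "\<alpha> i j = \<beta> i j"
      proof (cases "d = 0")
        case False
        have powers: "bcoeff (biv \<alpha> ^ n) i j = bcoeff (biv \<beta> ^ n) i j" if "n \<noteq> 1" for n
          using bcoeff_power_lower_degree[of "biv \<alpha>" "biv \<beta>" i j n] \<alpha>0 \<beta>0 less d that by simp
        have split: "comp_biv f \<gamma> i j = f 1 * \<gamma> i j +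
            (\<Sum>n\<in>{0..i+j} - {1}. f n * bcoeff (biv \<gamma> ^ n) i j)" for \<gamma>
          using False d by (simp add: comp_biv_def sum.remove[of _ 1] flip: bcoeff_def)
        have "comp_biv f \<alpha> i j = comp_biv f \<beta> i j"
          using \<alpha> \<beta> by (simp add: fgl_with_log_def)
        then have "f 1 * \<alpha> i j = f 1 * \<beta> i j"
          unfolding split by (simp add: powers)
        then show ?thesis using f1 by simp
      qed (use d \<alpha>0 \<beta>0 in simp)
    qed
  qed
  then show ?thesis by blast
qed

section \<open>Setting an auxiliary variable to one\<close>

text \<open>A series in \<open>t\<close> over \<open>R[[x,y]]\<close> is evaluated at \<open>t = 1\<close> by summing, for each monomial
  \<open>x\<^sup>i y\<^sup>j\<close>, the coefficients of \<open>t\<^sup>N\<close> with \<open>N \<le> 2(i+j)\<close>; this is the true value for series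
  satisfying \<open>t_bounded\<close>, which are closed under products.\<close>
definition subst_t_one :: "'a::comm_monoid_add fps fps fps \<Rightarrow> 'a fps fps" where
  "subst_t_one X = Abs_fps (\<lambda>j. Abs_fps (\<lambda>i. \<Sum>n\<le>2*(i+j). bcoeff (X $ n) i j))"

definition t_bounded :: "'a::zero fps fps fps \<Rightarrow> bool" where
  "t_bounded X \<longleftrightarrow> (\<forall>n i j. bcoeff (X $ n) i j \<noteq> 0 \<longrightarrow> n \<le> 2*(i+j))"

definition t_bounded_strict :: "'a::zero fps fps fps \<Rightarrow> bool" where
  "t_bounded_strict X \<longleftrightarrow> (\<forall>n i j. bcoeff (X $ n) i j \<noteq> 0 \<longrightarrow> n < 2*(i+j))"

lemma bcoeff_subst_t_one: "bcoeff (subst_t_one X) i j = (\<Sum>n\<le>2*(i+j). bcoeff (X $ n) i j)"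
  by (simp add: subst_t_one_def bcoeff_def)

lemma bcoeff_fps_mult_nth:
  fixes X Y :: "'a::comm_semiring_1 fps fps fps"
  shows "bcoeff ((X * Y) $ n) i j = (\<Sum>k\<le>n. \<Sum>j1\<le>j. \<Sum>i1\<le>i.
            bcoeff (X $ k) i1 j1 * bcoeff (Y $ (n - k)) (i - i1) (j - j1))"
  by (simp add: fps_mult_nth bcoeff_sum bcoeff_mult atLeast0AtMost)

lemma sum_antidiagonal_box:
  fixes f :: "nat \<Rightarrow> nat \<Rightarrow> 'a::comm_monoid_add"
  assumes "\<And>k l. f k l \<noteq> 0 \<Longrightarrow> k \<le> A \<and> l \<le> B"
  shows "(\<Sum>n\<le>A+B. \<Sum>k\<le>n. f k (n - k)) = (\<Sum>k\<le>A. \<Sum>l\<le>B. f k l)"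
proof -
  have "(\<Sum>n\<le>A+B. \<Sum>k\<le>n. f k (n - k)) = (\<Sum>(k,l)\<in>{(k,l). k+l \<le> A+B}. f k l)"
    by (rule sum.triangle_reindex_eq[symmetric])
  also have "\<dots> = (\<Sum>(k,l)\<in>{..A}\<times>{..B}. f k l)"
  proof (rule sum.mono_neutral_right)
    show "finite {(k,l). k+l \<le> A+B}"
      by (rule finite_subset[of _ "{..A+B}\<times>{..A+B}"]) auto
  qed (use assms in fastforce)+
  also have "\<dots> = (\<Sum>k\<le>A. \<Sum>l\<le>B. f k l)"
    by (simp add: sum.cartesian_product)
  finally show ?thesis .
qed

lemma sum_swap3:
  "(\<Sum>k\<in>A. \<Sum>j\<in>B. \<Sum>i\<in>C. f k j i) = (\<Sum>j\<in>B. \<Sum>i\<in>C. \<Sum>k\<in>A. f k j i)"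
  by (subst sum.swap) (intro sum.cong refl, rule sum.swap)

lemma subst_t_one_mult:
  fixes X Y :: "'a::comm_semiring_1 fps fps fps"
  assumes X: "t_bounded X" and Y: "t_bounded Y"
  shows "subst_t_one (X * Y) = subst_t_one X * subst_t_one Y"
proof (rule bcoeff_ext)
  fix i j
  let ?f = "\<lambda>i1 j1 k l. bcoeff (X $ k) i1 j1 * bcoeff (Y $ l) (i - i1) (j - j1)"
  have "bcoeff (subst_t_one (X * Y)) i j =
    (\<Sum>n\<le>2*(i+j). \<Sum>k\<le>n. \<Sum>j1\<le>j. \<Sum>i1\<le>i. ?f i1 j1 k (n - k))"
    by (simp add: bcoeff_subst_t_one bcoeff_fps_mult_nth)
  also have "\<dots> = (\<Sum>j1\<le>j. \<Sum>i1\<le>i. \<Sum>n\<le>2*(i+j). \<Sum>k\<le>n. ?f i1 j1 k (n - k))"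
    by (rule trans[OF sum.cong[OF refl sum_swap3] sum_swap3])
  also have "\<dots> = (\<Sum>j1\<le>j. \<Sum>i1\<le>i. (\<Sum>k\<le>2*(i1+j1). bcoeff (X $ k) i1 j1) *
                     (\<Sum>l\<le>2*((i-i1)+(j-j1)). bcoeff (Y $ l) (i - i1) (j - j1)))"
  proof (intro sum.cong refl)
    fix j1 i1 assume "j1 \<in> {..j}" "i1 \<in> {..i}"
    then have split: "2*(i+j) = 2*(i1+j1) + 2*((i-i1)+(j-j1))" by auto
    show "(\<Sum>n\<le>2*(i+j). \<Sum>k\<le>n. ?f i1 j1 k (n - k)) =
      (\<Sum>k\<le>2*(i1+j1). bcoeff (X $ k) i1 j1) * (\<Sum>l\<le>2*((i-i1)+(j-j1)). bcoeff (Y $ l) (i - i1) (j - j1))"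
      unfolding split sum_product
      by (rule sum_antidiagonal_box) (use X Y in \<open>auto simp: t_bounded_def dest: mult_not_zero\<close>)
  qed
  also have "\<dots> = bcoeff (subst_t_one X * subst_t_one Y) i j"
    by (simp add: bcoeff_mult bcoeff_subst_t_one)
  finally show "bcoeff (subst_t_one (X * Y)) i j = bcoeff (subst_t_one X * subst_t_one Y) i j" .
qed

lemma bcoeff_fps_mult_nth_nonzero:
  fixes X Y :: "'a::comm_semiring_1 fps fps fps"
  assumes "bcoeff ((X * Y) $ n) i j \<noteq> 0"
  obtains k l i1 i2 j1 j2 where "n = k + l" "i = i1 + i2" "j = j1 + j2"
    "bcoeff (X $ k) i1 j1 \<noteq> 0" "bcoeff (Y $ l) i2 j2 \<noteq> 0"
proof -
  obtain k i1 j1 where "k \<le> n" "i1 \<le> i" "j1 \<le> j"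
    "bcoeff (X $ k) i1 j1 \<noteq> 0" "bcoeff (Y $ (n - k)) (i - i1) (j - j1) \<noteq> 0"
    using assms unfolding bcoeff_fps_mult_nth
    by (auto elim!: sum.not_neutral_contains_not_neutral dest: mult_not_zero)
  then show thesis
    using that[of k "n - k" i1 "i - i1" j1 "j - j1"] by simp
qed

lemma t_bounded_mult:
  fixes X Y :: "'a::comm_semiring_1 fps fps fps"
  assumes "t_bounded X" "t_bounded Y" shows "t_bounded (X * Y)"
  unfolding t_bounded_def
proof (intro allI impI)
  fix n i j assume "bcoeff ((X * Y) $ n) i j \<noteq> 0"
  then obtain k l i1 i2 j1 j2 where "n = k + l" "i = i1 + i2" "j = j1 + j2"
    "bcoeff (X $ k) i1 j1 \<noteq> 0" "bcoeff (Y $ l) i2 j2 \<noteq> 0"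
    by (rule bcoeff_fps_mult_nth_nonzero)
  with assms show "n \<le> 2*(i+j)"
    unfolding t_bounded_def by fastforce
qed

lemma t_bounded_strict_mult:
  fixes X Y :: "'a::comm_semiring_1 fps fps fps"
  assumes "t_bounded X" "t_bounded_strict Y" shows "t_bounded_strict (X * Y)"
  unfolding t_bounded_strict_def
proof (intro allI impI)
  fix n i j assume "bcoeff ((X * Y) $ n) i j \<noteq> 0"
  then obtain k l i1 i2 j1 j2 where "n = k + l" "i = i1 + i2" "j = j1 + j2"
    "bcoeff (X $ k) i1 j1 \<noteq> 0" "bcoeff (Y $ l) i2 j2 \<noteq> 0"
    by (rule bcoeff_fps_mult_nth_nonzero)
  with assms show "n < 2*(i+j)"
    unfolding t_bounded_def t_bounded_strict_def by fastforce
qed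

lemma t_bounded_strict_imp_t_bounded: "t_bounded_strict X \<Longrightarrow> t_bounded X"
  by (auto simp: t_bounded_strict_def t_bounded_def less_imp_le)

lemma t_bounded_const: "t_bounded (fps_const A)"
  by (auto simp: t_bounded_def bcoeff_def)

lemma t_bounded_power:
  fixes X :: "'a::comm_semiring_1 fps fps fps"
  shows "t_bounded X \<Longrightarrow> t_bounded (X ^ n)"
  by (induction n) (auto simp: t_bounded_mult simp flip: fps_const_1_eq_1 intro: t_bounded_const)

lemma subst_t_one_const:
  fixes A :: "'a::comm_semiring_1 fps fps"
  shows "subst_t_one (fps_const A) = A"
proof (rule bcoeff_ext)
  fix i j
  have "bcoeff (fps_const A $ n) i j = (if n = 0 then bcoeff A i j else 0)" for n
    by simp
  then show "bcoeff (subst_t_one (fps_const A)) i j = bcoeff A i j"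
    by (simp add: bcoeff_subst_t_one)
qed

lemma subst_t_one_power:
  fixes X :: "'a::comm_semiring_1 fps fps fps"
  assumes "t_bounded X" shows "subst_t_one (X ^ n) = subst_t_one X ^ n"
proof (induction n)
  case 0 show ?case using subst_t_one_const[of 1] by simp
next
  case (Suc n) then show ?case by (simp add: subst_t_one_mult t_bounded_power assms)
qed

lemma subst_t_one_add:
  fixes X Y :: "'a::comm_semiring_1 fps fps fps"
  shows "subst_t_one (X + Y) = subst_t_one X + subst_t_one Y"
  by (rule bcoeff_ext) (simp add: bcoeff_subst_t_one sum.distrib)

lemma subst_t_one_sum:
  fixes f :: "'b \<Rightarrow> 'a::comm_semiring_1 fps fps fps"
  shows "subst_t_one (sum f S) = (\<Sum>x\<in>S. subst_t_one (f x))"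
  by (induction S rule: infinite_finite_induct)
     (auto simp: subst_t_one_add subst_t_one_const[of 0, simplified])

lemma subst_t_one_X_mult:
  fixes Z :: "'a::comm_semiring_1 fps fps fps"
  assumes "t_bounded_strict Z" shows "subst_t_one (fps_X * Z) = subst_t_one Z"
proof (rule bcoeff_ext)
  fix i j
  have "bcoeff (subst_t_one (fps_X * Z)) i j = (\<Sum>n<2*(i+j). bcoeff (Z $ n) i j)"
  proof (cases "i + j")
    case (Suc k)
    then have "2*(i+j) = Suc (2*k+1)" by simp
    then show ?thesis unfolding bcoeff_subst_t_one
      by (simp only: sum.atMost_Suc_shift) (simp add: bcoeff_def lessThan_Suc_atMost)
  qed (simp add: bcoeff_subst_t_one bcoeff_def[of "fps_X * Z"])
  also have "\<dots> = bcoeff (subst_t_one Z) i j"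
  proof -
    have "bcoeff (Z $ (2*(i+j))) i j = 0"
      using assms unfolding t_bounded_strict_def by blast
    then show ?thesis by (simp add: bcoeff_subst_t_one flip: lessThan_Suc_atMost)
  qed
  finally show "bcoeff (subst_t_one (fps_X * Z)) i j = bcoeff (subst_t_one Z) i j" .
qed

lemma bcoeff_subst_t_one_0:
  fixes W :: "'a::comm_semiring_1 fps fps fps"
  assumes "W $ 0 = 0" shows "bcoeff (subst_t_one W) 0 0 = 0"
  using assms unfolding bcoeff_subst_t_one by (simp add: bcoeff_def)

section \<open>The fixed point equation of the formal group law\<close>

definition tmonom :: "'a::comm_semiring_1 \<Rightarrow> nat \<Rightarrow> nat \<Rightarrow> nat \<Rightarrow> 'a fps fps fps" where
  "tmonom c a b e = fps_const (bmonom c a b) * fps_X ^ e"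

lemma tmonom_mult: "tmonom c a b e * tmonom c' a' b' e' = tmonom (c * c') (a + a') (b + b') (e + e')"
  by (simp add: tmonom_def power_add mult_ac flip: bmonom_mult)

lemma tmonom_1: "tmonom 1 0 0 0 = 1"
  by (simp add: tmonom_def bmonom_1)

lemma tmonom_power: "tmonom c a b e ^ k = tmonom (c ^ k) (k * a) (k * b) (k * e)"
  by (induction k) (simp_all add: tmonom_1 tmonom_mult add_ac)

lemma prod_tmonom_power:
  assumes "finite L"
  shows "(\<Prod>l\<in>L. tmonom (c l) (a l) (b l) (e l) ^ k l) =
    tmonom (\<Prod>l\<in>L. c l ^ k l) (\<Sum>l\<in>L. k l * a l) (\<Sum>l\<in>L. k l * b l) (\<Sum>l\<in>L. k l * e l)"
  using assms
  by (induction L rule: finite_induct) (simp_all add: tmonom_1 tmonom_power tmonom_mult)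

lemma bcoeff_tmonom_nth:
  "bcoeff (tmonom c a b e $ n) i j = (if n = e \<and> i = a \<and> j = b then c else 0)"
  by (simp add: tmonom_def bcoeff_bmonom mult.commute[of _ "fps_X ^ e"] fps_X_power_mult_nth)

lemma bcoeff_power_sum_tmonom_nth:
  fixes c :: "'l \<Rightarrow> 'a::comm_semiring_1"
  assumes "finite L"
  shows "bcoeff (((\<Sum>l\<in>L. tmonom (c l) (a l) (b l) (e l)) ^ k) $ n) i j =
    (\<Sum>m\<in>weak_compositions L k.
       if (\<Sum>l\<in>L. m l * e l) = n \<and> (\<Sum>l\<in>L. m l * a l) = i \<and> (\<Sum>l\<in>L. m l * b l) = j
       then of_nat (multinomial_coeff L m) * (\<Prod>l\<in>L. c l ^ m l) else 0)"
  by (simp add: multinomial_theorem[OF assms] prod_tmonom_power[OF assms] fps_sum_nth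
      bcoeff_sum bcoeff_const_mult bcoeff_tmonom_nth flip: fps_of_nat)
     (auto intro: sum.cong)

datatype kernel_part = Xpart | Ypart | Wpart

lemma UNIV_kernel_part: "(UNIV :: kernel_part set) = {Xpart, Ypart, Wpart}"
  using kernel_part.exhaust by auto

instance kernel_part :: finite
  by standard (simp add: UNIV_kernel_part)

definition kernel_index :: "nat \<Rightarrow> (nat \<times> kernel_part) set" where
  "kernel_index M = {..M} \<times> UNIV"

lemma finite_kernel_index [simp]: "finite (kernel_index M)"
  by (simp add: kernel_index_def)

lemma sum_kernel_index:
  "(\<Sum>l\<in>kernel_index M. g l) = (\<Sum>r\<le>M. g (r, Xpart) + g (r, Ypart) + g (r, Wpart))"
  by (simp add: kernel_index_def sum.cartesian_product' UNIV_kernel_part add_ac)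

lemma prod_kernel_index:
  "(\<Prod>l\<in>kernel_index M. g l) = (\<Prod>r\<le>M. g (r, Xpart) * g (r, Ypart) * g (r, Wpart))"
  by (simp add: kernel_index_def prod.cartesian_product' UNIV_kernel_part mult_ac)

fun kernel_coeff :: "nat \<Rightarrow> nat \<times> kernel_part \<Rightarrow> rat" where
  "kernel_coeff p (r, Wpart) = (if r = 0 then 0 else - 1 / of_nat p ^ r)"
| "kernel_coeff p (r, _) = 1 / of_nat p ^ r"

fun kernel_xdeg :: "nat \<Rightarrow> nat \<Rightarrow> nat \<times> kernel_part \<Rightarrow> nat" where
  "kernel_xdeg p s (r, Xpart) = p ^ (r * s)"
| "kernel_xdeg p s (r, _) = 0"

fun kernel_ydeg :: "nat \<Rightarrow> nat \<Rightarrow> nat \<times> kernel_part \<Rightarrow> nat" where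
  "kernel_ydeg p s (r, Ypart) = p ^ (r * s)"
| "kernel_ydeg p s (r, _) = 0"

fun kernel_wdeg :: "nat \<Rightarrow> nat \<Rightarrow> nat \<times> kernel_part \<Rightarrow> nat" where
  "kernel_wdeg p s (r, Wpart) = p ^ (r * s)"
| "kernel_wdeg p s (r, _) = 0"

text \<open>\<open>\<phi>(w) = \<Sum>\<^sub>r\<^sub>\<le>\<^sub>M p\<^sup>-\<^sup>r (x\<^sup>q\<^sup>\<^sub>r + y\<^sup>q\<^sup>\<^sub>r - [r \<ge> 1] w\<^sup>q\<^sup>\<^sub>r)\<close> with \<open>q\<^sub>r = p\<^sup>r\<^sup>s\<close>, as a series in \<open>w\<close> over \<open>\<rat>[[x,y]]\<close>;
  \<open>tmonom c a b e\<close> stands for \<open>c x\<^sup>a y\<^sup>b w\<^sup>e\<close>, and the summand indexed by \<open>(r, Xpart)\<close>,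
  \<open>(r, Ypart)\<close>, \<open>(r, Wpart)\<close> is the one containing \<open>x\<^sup>q\<^sup>\<^sub>r\<close>, \<open>y\<^sup>q\<^sup>\<^sub>r\<close>, \<open>w\<^sup>q\<^sup>\<^sub>r\<close> respectively.
  The formal group law satisfies \<open>F = \<phi>(F)\<close> up to total degree \<open>M\<close>; Lagrange inversion is
  applied to \<open>W = t \<phi>(W)\<close>, where \<open>t\<close> is the same variable as \<open>w\<close>.\<close>
definition fgl_kernel :: "nat \<Rightarrow> nat \<Rightarrow> nat \<Rightarrow> rat fps fps fps" where
  "fgl_kernel p s M = (\<Sum>l\<in>kernel_index M.
     tmonom (kernel_coeff p l) (kernel_xdeg p s l) (kernel_ydeg p s l) (kernel_wdeg p s l))"

lemma kernel_index_size_bound: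
  assumes p: "p \<ge> 2" and s: "s \<ge> 1" and m0: "m (0, Wpart) = 0"
    and size: "(\<Sum>l\<in>kernel_index M. m l) = Suc n"
    and wdeg: "(\<Sum>l\<in>kernel_index M. m l * kernel_wdeg p s l) = n"
    and xdeg: "(\<Sum>l\<in>kernel_index M. m l * kernel_xdeg p s l) = i"
    and ydeg: "(\<Sum>l\<in>kernel_index M. m l * kernel_ydeg p s l) = j"
  shows "Suc n < 2 * (i + j)"
proof -
  define X Y W where "X = (\<Sum>r\<le>M. m (r, Xpart))" and "Y = (\<Sum>r\<le>M. m (r, Ypart))"
    and "W = (\<Sum>r\<le>M. m (r, Wpart))"
  have "i = (\<Sum>r\<le>M. m (r, Xpart) * p ^ (r * s))" "j = (\<Sum>r\<le>M. m (r, Ypart) * p ^ (r * s))"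
    and n: "n = (\<Sum>r\<le>M. m (r, Wpart) * p ^ (r * s))"
    using xdeg ydeg wdeg by (simp_all add: sum_kernel_index)
  moreover have "m (r, t) \<le> m (r, t) * p ^ (r * s)" for r t
    using p by simp
  ultimately have "X \<le> i" and "Y \<le> j"
    unfolding X_def Y_def by (simp_all add: sum_mono)
  have "2 * m (r, Wpart) \<le> m (r, Wpart) * p ^ (r * s)" for r
  proof (cases "r = 0")
    case False
    then have "p ^ 1 \<le> p ^ (r * s)" using p s by (intro power_increasing) auto
    with p show ?thesis by simp
  qed (use m0 in simp)
  then have "2 * W \<le> n"
    unfolding n W_def sum_distrib_left by (rule sum_mono)
  moreover have "Suc n = X + Y + W"
    using size by (simp add: X_def Y_def W_def sum_kernel_index sum.distrib)
  ultimately have "n + 2 \<le> 2 * X + 2 * Y" by linarith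
  with \<open>X \<le> i\<close> \<open>Y \<le> j\<close> show ?thesis unfolding distrib_left by linarith
qed

context
  fixes p s M :: nat and W :: "rat fps fps fps"
  assumes p: "p \<ge> 2" and s: "s \<ge> 1"
    and W0: "W $ 0 = 0" and W: "W = fps_X * (fgl_kernel p s M oo W)"
begin

lemma bcoeff_kernel_solution:
  "bcoeff (W $ Suc n) i j = (\<Sum>m\<in>weak_compositions (kernel_index M) (Suc n).
     if (\<Sum>l\<in>kernel_index M. m l * kernel_wdeg p s l) = n \<and>
        (\<Sum>l\<in>kernel_index M. m l * kernel_xdeg p s l) = i \<and>
        (\<Sum>l\<in>kernel_index M. m l * kernel_ydeg p s l) = j
     then of_nat (multinomial_coeff (kernel_index M) m) *
          (\<Prod>l\<in>kernel_index M. kernel_coeff p l ^ m l) / of_nat (Suc n)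
     else 0)"
proof -
  have "of_nat (Suc n) * bcoeff (W $ Suc n) i j = bcoeff (of_nat (Suc n) * W $ Suc n) i j"
    by (simp only: bcoeff_of_nat_mult)
  also have "\<dots> = bcoeff ((fgl_kernel p s M ^ Suc n) $ n) i j"
    by (simp only: lagrange_inversion[OF W0 W])
  finally have "bcoeff (W $ Suc n) i j = bcoeff ((fgl_kernel p s M ^ Suc n) $ n) i j / of_nat (Suc n)"
    by (simp add: eq_divide_eq mult.commute del: of_nat_Suc)
  then show ?thesis
    unfolding fgl_kernel_def bcoeff_power_sum_tmonom_nth[OF finite_kernel_index] sum_divide_distrib
    by (simp add: if_distrib[of "\<lambda>x. x / _"] cong: if_cong)
qed

lemma kernel_solution_t_bounded_strict: "t_bounded_strict W"
  unfolding t_bounded_strict_def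
proof (intro allI impI)
  fix N i j assume nz: "bcoeff (W $ N) i j \<noteq> 0"
  show "N < 2 * (i + j)"
  proof (cases N)
    case (Suc n)
    from nz obtain m where m: "m \<in> weak_compositions (kernel_index M) (Suc n)"
      and wdeg: "(\<Sum>l\<in>kernel_index M. m l * kernel_wdeg p s l) = n"
      and xdeg: "(\<Sum>l\<in>kernel_index M. m l * kernel_xdeg p s l) = i"
      and ydeg: "(\<Sum>l\<in>kernel_index M. m l * kernel_ydeg p s l) = j"
      and coeff: "(\<Prod>l\<in>kernel_index M. kernel_coeff p l ^ m l) \<noteq> 0"
      unfolding Suc bcoeff_kernel_solution
      by (auto elim!: sum.not_neutral_contains_not_neutral split: if_splits)
    have "(0, Wpart) \<in> kernel_index M" by (simp add: kernel_index_def)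
    then have "m (0, Wpart) = 0"
      using coeff by (auto simp: prod_zero_iff)
    moreover have "(\<Sum>l\<in>kernel_index M. m l) = Suc n"
      using m by (simp add: weak_compositions_def)
    ultimately show ?thesis
      using kernel_index_size_bound[OF p s _ _ wdeg xdeg ydeg] Suc by simp
  qed (use nz W0 in simp)
qed

lemma kernel_term_t_bounded_strict:
  "t_bounded_strict (fps_const (bmonom (kernel_coeff p l) (kernel_xdeg p s l) (kernel_ydeg p s l))
           * W ^ kernel_wdeg p s l)"
proof -
  obtain r t where l: "l = (r, t)" by (cases l)
  have W_bounded: "t_bounded W"
    by (rule t_bounded_strict_imp_t_bounded[OF kernel_solution_t_bounded_strict])
  show ?thesis
  proof (cases t)
    case Wpart
    have "p ^ (r * s) = Suc (p ^ (r * s) - 1)" using p by simp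
    then have "W ^ kernel_wdeg p s l = W ^ (p ^ (r * s) - 1) * W"
      using l Wpart by (metis kernel_wdeg.simps(1) power_Suc2)
    then show ?thesis
      by (simp only: mult.assoc[symmetric])
         (intro t_bounded_strict_mult t_bounded_mult t_bounded_const t_bounded_power
            W_bounded kernel_solution_t_bounded_strict)
  next
    case Xpart
    with p show ?thesis
      by (auto simp: l t_bounded_strict_def bcoeff_def bmonom_def)
  next
    case Ypart
    with p show ?thesis
      by (auto simp: l t_bounded_strict_def bcoeff_def bmonom_def)
  qed
qed

lemma subst_t_one_kernel_solution:
  "subst_t_one W = (\<Sum>l\<in>kernel_index M.
     bmonom (kernel_coeff p l) (kernel_xdeg p s l) (kernel_ydeg p s l) * subst_t_one W ^ kernel_wdeg p s l)"
proof -
  have W_bounded: "t_bounded W"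
    by (rule t_bounded_strict_imp_t_bounded[OF kernel_solution_t_bounded_strict])
  have "tmonom c a b e oo W = fps_const (bmonom c a b) * W ^ e" for c a b e
    using fps_compose_power[OF W0, of fps_X e] W0
    by (simp add: tmonom_def fps_const_mult_apply_left)
  then have "W = (\<Sum>l\<in>kernel_index M. fps_X * (fps_const
      (bmonom (kernel_coeff p l) (kernel_xdeg p s l) (kernel_ydeg p s l)) * W ^ kernel_wdeg p s l))"
    by (subst W) (simp add: fgl_kernel_def fps_compose_sum_distrib sum_distrib_left)
  also have "subst_t_one \<dots> = (\<Sum>l\<in>kernel_index M.
      bmonom (kernel_coeff p l) (kernel_xdeg p s l) (kernel_ydeg p s l) * subst_t_one W ^ kernel_wdeg p s l)"
    by (simp add: subst_t_one_sum subst_t_one_X_mult kernel_term_t_bounded_strict subst_t_one_mult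
        subst_t_one_const subst_t_one_power t_bounded_const t_bounded_power W_bounded)
  finally show ?thesis .
qed

text \<open>At \<open>t = 1\<close> the fixed point equation becomes \<open>g\<^sub>M(F) = g\<^sub>M(x) + g\<^sub>M(y)\<close> for the
  logarithm \<open>g\<^sub>M(w) = \<Sum>\<^sub>r\<^sub>\<le>\<^sub>M w\<^sup>q\<^sup>\<^sub>r / p\<^sup>r\<close> truncated at \<open>M\<close>: the \<open>r = 0\<close> summand of \<open>g\<^sub>M(F)\<close> is \<open>F\<close>
  itself, which the kernel expresses through the other summands.\<close>
lemma kernel_solution_log_identity:
  "(\<Sum>r\<le>M. bcoeff (subst_t_one W ^ (p ^ (r * s))) i j / of_nat p ^ r) =
   (\<Sum>r\<le>M. ((if i = p ^ (r * s) \<and> j = 0 then 1 else 0) +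
             (if i = 0 \<and> j = p ^ (r * s) then 1 else 0)) / of_nat p ^ r)"
  (is "(\<Sum>r\<le>M. ?G r) = (\<Sum>r\<le>M. ?H r)")
proof -
  let ?F = "subst_t_one W"
  have rearrange: "(if A then 1 / x else 0) + (if B then 1 / x else 0) + (if r = 0 then 0 else - 1 / x) * G =
      ((if A then 1 else 0) + (if B then 1 else 0)) / x + (if r = 0 then 0 else - (G / x))"
    for A B :: bool and r :: nat and x G :: rat
    by (simp add: add_divide_distrib)
  have "bcoeff ?F i j = (\<Sum>r\<le>M. bcoeff (bmonom (1 / of_nat p ^ r) (p ^ (r * s)) 0) i j +
      bcoeff (bmonom (1 / of_nat p ^ r) 0 (p ^ (r * s))) i j +
      bcoeff (bmonom (kernel_coeff p (r, Wpart)) 0 0 * ?F ^ p ^ (r * s)) i j)"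
    by (subst subst_t_one_kernel_solution) (simp add: bcoeff_sum sum_kernel_index)
  also have "\<dots> = (\<Sum>r\<le>M. ?H r + (if r = 0 then 0 else - ?G r))"
    by (intro sum.cong refl)
       (simp only: bmonom_0_0 bcoeff_const_mult bcoeff_bmonom kernel_coeff.simps rearrange)
  finally have "?G 0 = (\<Sum>r\<le>M. ?H r) - (\<Sum>r<M. ?G (Suc r))"
    by (simp add: sum.distrib sum.atMost_shift sum_negf)
  then show ?thesis
    by (simp add: sum.atMost_shift)
qed

end

section \<open>Matching the closed formula\<close>

lemma exponent_less_power:
  fixes p s r :: nat
  assumes "p \<ge> 2" "s \<ge> 1" shows "r < p ^ (r * s)"
proof -
  have "r < 2 ^ r" by (rule less_exp)
  also have "(2::nat) ^ r \<le> p ^ r" using assms by (intro power_mono) auto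
  also have "p ^ r \<le> p ^ (r * s)" using assms by (intro power_increasing) auto
  finally show ?thesis .
qed

lemma atMost_eq_insert_0: "{..M} = insert 0 {1..M::nat}"
  by auto

lemma sum_support_eq:
  fixes h :: "nat \<Rightarrow> 'a::comm_monoid_add"
  assumes "\<And>r. \<nu> r \<noteq> 0 \<Longrightarrow> r \<in> {1..M}" "\<And>r. r \<in> {1..M} \<Longrightarrow> \<nu> r = 0 \<Longrightarrow> h r = 0"
  shows "(\<Sum>r\<in>{r. \<nu> r \<noteq> 0}. h r) = (\<Sum>r\<in>{1..M}. h r)"
  by (rule sum.mono_neutral_left) (use assms in auto)

lemma prod_support_eq:
  fixes h :: "nat \<Rightarrow> 'a::comm_monoid_mult"
  assumes "\<And>r. \<nu> r \<noteq> 0 \<Longrightarrow> r \<in> {1..M}" "\<And>r. r \<in> {1..M} \<Longrightarrow> \<nu> r = 0 \<Longrightarrow> h r = 1"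
  shows "(\<Prod>r\<in>{r. \<nu> r \<noteq> 0}. h r) = (\<Prod>r\<in>{1..M}. h r)"
  by (rule prod.mono_neutral_left) (use assms in auto)

text \<open>A multi-index \<open>m\<close> of the kernel records how often each summand of \<open>\<phi>\<close> is chosen; in the
  notation of the closed formula \<open>i\<^sub>r = m(r, X)\<close>, \<open>j\<^sub>r = m(r, Y)\<close>, \<open>k\<^sub>r = m(r, W)\<close> and
  \<open>\<nu>\<^sub>r = i\<^sub>r + j\<^sub>r + k\<^sub>r\<close> for \<open>r \<ge> 1\<close>.\<close>
definition index_nu :: "(nat \<times> kernel_part \<Rightarrow> nat) \<Rightarrow> nat \<Rightarrow> nat" where
  "index_nu m r = (if r = 0 then 0 else m (r, Xpart) + m (r, Ypart) + m (r, Wpart))"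

definition split_index :: "(nat \<times> kernel_part \<Rightarrow> nat) \<Rightarrow>
    (nat \<Rightarrow> nat) \<times> (nat \<Rightarrow> nat) \<times> (nat \<Rightarrow> nat) \<times> (nat \<Rightarrow> nat)" where
  "split_index m = (index_nu m, \<lambda>r. m (r, Xpart), \<lambda>r. m (r, Ypart), \<lambda>r. m (r, Wpart))"

definition join_index :: "nat \<Rightarrow> (nat \<Rightarrow> nat) \<Rightarrow> (nat \<Rightarrow> nat) \<Rightarrow> (nat \<Rightarrow> nat) \<Rightarrow>
    nat \<times> kernel_part \<Rightarrow> nat" where
  "join_index M a b c = (\<lambda>(r, t). if r \<le> M then
     (case t of Xpart \<Rightarrow> a r | Ypart \<Rightarrow> b r | Wpart \<Rightarrow> c r) else 0)"

lemma join_index_outside: "l \<notin> kernel_index M \<Longrightarrow> join_index M a b c l = 0"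
  by (cases l) (auto simp: join_index_def kernel_index_def)

lemma sums_join_index:
  "(\<Sum>l\<in>kernel_index M. join_index M a b c l) = (\<Sum>r\<le>M. a r + b r + c r)"
  "(\<Sum>l\<in>kernel_index M. join_index M a b c l * kernel_xdeg p s l) = (\<Sum>r\<le>M. p ^ (r * s) * a r)"
  "(\<Sum>l\<in>kernel_index M. join_index M a b c l * kernel_ydeg p s l) = (\<Sum>r\<le>M. p ^ (r * s) * b r)"
  "(\<Sum>l\<in>kernel_index M. join_index M a b c l * kernel_wdeg p s l) = (\<Sum>r\<le>M. p ^ (r * s) * c r)"
  by (auto simp: sum_kernel_index join_index_def intro!: sum.cong)

lemma prod_kernel_coeff_power:
  assumes "m (0, Wpart) = 0"
  shows "(\<Prod>l\<in>kernel_index M. kernel_coeff p l ^ m l) =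
    (-1) ^ (\<Sum>r\<in>{1..M}. m (r, Wpart)) / of_nat p ^ (\<Sum>r\<in>{1..M}. r * index_nu m r)"
proof -
  have "kernel_coeff p (r, Xpart) ^ m (r, Xpart) * kernel_coeff p (r, Ypart) ^ m (r, Ypart) *
      kernel_coeff p (r, Wpart) ^ m (r, Wpart) = (-1) ^ m (r, Wpart) / of_nat p ^ (r * index_nu m r)"
    if "r \<in> {1..M}" for r
    using that by (simp add: index_nu_def power_add power_mult power_divide power_minus' mult.assoc)
  then have "(\<Prod>l\<in>kernel_index M. kernel_coeff p l ^ m l) =
      (\<Prod>r\<in>{1..M}. (-1) ^ m (r, Wpart) / of_nat p ^ (r * index_nu m r))"
    using assms by (simp add: prod_kernel_index atMost_eq_insert_0)
  also have "\<dots> = (-1) ^ (\<Sum>r\<in>{1..M}. m (r, Wpart)) / of_nat p ^ (\<Sum>r\<in>{1..M}. r * index_nu m r)"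
    by (simp add: prod_dividef power_sum)
  finally show ?thesis .
qed

context
  fixes p s M i j :: nat
  assumes p: "p \<ge> 2" and s: "s \<ge> 1" and ij: "i + j \<ge> 1" and M: "i + j \<le> M"
begin

lemma nu_set_support:
  assumes \<nu>: "\<nu> \<in> nu_set p s (i + j - 1)" and "\<nu> r \<noteq> 0"
  shows "r \<in> {1..M}"
proof -
  have "\<nu> 0 = 0" and fin: "finite {r. \<nu> r \<noteq> 0}"
    and sum: "(\<Sum>r\<in>{r. \<nu> r \<noteq> 0}. (p ^ (r * s) - 1) * \<nu> r) = i + j - 1"
    using \<nu> by (auto simp: nu_set_def)
  then have "r \<noteq> 0" using \<open>\<nu> r \<noteq> 0\<close> by (metis)
  have "(p ^ (r * s) - 1) * 1 \<le> (p ^ (r * s) - 1) * \<nu> r"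
    using \<open>\<nu> r \<noteq> 0\<close> by (intro mult_le_mono2) simp
  also have "\<dots> \<le> i + j - 1"
    using fin \<open>\<nu> r \<noteq> 0\<close> by (subst sum[symmetric], intro member_le_sum) auto
  finally have "r \<le> M"
    using exponent_less_power[OF p s, of r] M by linarith
  with \<open>r \<noteq> 0\<close> show ?thesis by simp
qed

lemma finite_nu_set: "finite (nu_set p s (i + j - 1))"
proof (rule finite_subset)
  show "nu_set p s (i + j - 1) \<subseteq>
      {f. \<forall>x. (x \<in> {1..M} \<longrightarrow> f x \<in> {..i+j}) \<and> (x \<notin> {1..M} \<longrightarrow> f x = 0)}"
  proof (intro subsetI CollectI allI conjI impI)
    fix \<nu> x assume \<nu>: "\<nu> \<in> nu_set p s (i + j - 1)"
    show "x \<notin> {1..M} \<Longrightarrow> \<nu> x = 0" using nu_set_support[OF \<nu>] by blast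
    assume x: "x \<in> {1..M}"
    show "\<nu> x \<in> {..i+j}"
    proof (cases "\<nu> x = 0")
      case False
      have "1 \<le> x" using x by simp
      then have "1 \<le> p ^ (x * s) - 1"
        using exponent_less_power[OF p s, of x] by linarith
      then have "\<nu> x \<le> (p ^ (x * s) - 1) * \<nu> x" by simp
      also have "\<dots> \<le> (\<Sum>r\<in>{r. \<nu> r \<noteq> 0}. (p ^ (r * s) - 1) * \<nu> r)"
        using \<nu> False by (intro member_le_sum) (auto simp: nu_set_def)
      finally show ?thesis using \<nu> by (simp add: nu_set_def)
    qed simp
  qed
  show "finite {f. \<forall>x. (x \<in> {1..M} \<longrightarrow> f x \<in> {..i+j}) \<and> (x \<notin> {1..M} \<longrightarrow> f x = (0::nat))}"
    by (rule finite_set_of_finite_funs) auto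
qed

lemma formula_index_facts:
  assumes \<nu>: "\<nu> \<in> nu_set p s (i + j - 1)" and abc: "(a, b, c) \<in> idx_set p s \<nu> i j"
  shows "\<And>r. r > M \<Longrightarrow> a r = 0 \<and> b r = 0 \<and> c r = 0"
    and "c 0 = 0" and "\<nu> 0 = 0"
    and "\<And>r. r \<in> {1..M} \<Longrightarrow> a r + b r + c r = \<nu> r"
    and "a 0 + (\<Sum>r\<in>{1..M}. p ^ (r * s) * a r) = i"
    and "b 0 + (\<Sum>r\<in>{1..M}. p ^ (r * s) * b r) = j"
    and "(\<Sum>r\<in>{1..M}. (p ^ (r * s) - 1) * \<nu> r) = i + j - 1"
proof -
  note support = nu_set_support[OF \<nu>]
  have abc': "c 0 = 0" "\<And>r. r \<ge> 1 \<Longrightarrow> a r + b r + c r = \<nu> r"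
    "a 0 + (\<Sum>r\<in>{r. \<nu> r \<noteq> 0}. p ^ (r * s) * a r) = i"
    "b 0 + (\<Sum>r\<in>{r. \<nu> r \<noteq> 0}. p ^ (r * s) * b r) = j"
    using abc by (auto simp: idx_set_def)
  show "c 0 = 0" by (rule abc'(1))
  show "\<nu> 0 = 0" using \<nu> by (simp add: nu_set_def)
  show "a r = 0 \<and> b r = 0 \<and> c r = 0" if "r > M" for r
  proof -
    have "\<nu> r = 0" using support \<open>r > M\<close> by fastforce
    with abc'(2)[of r] \<open>r > M\<close> show ?thesis by simp
  qed
  show "\<And>r. r \<in> {1..M} \<Longrightarrow> a r + b r + c r = \<nu> r" using abc'(2) by simp
  have vanish: "\<And>r. r \<in> {1..M} \<Longrightarrow> \<nu> r = 0 \<Longrightarrow> a r = 0 \<and> b r = 0 \<and> c r = 0"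
    using abc'(2) by fastforce
  show "a 0 + (\<Sum>r\<in>{1..M}. p ^ (r * s) * a r) = i"
    using abc'(3) sum_support_eq[of \<nu> M "\<lambda>r. p ^ (r * s) * a r"] support vanish by simp
  show "b 0 + (\<Sum>r\<in>{1..M}. p ^ (r * s) * b r) = j"
    using abc'(4) sum_support_eq[of \<nu> M "\<lambda>r. p ^ (r * s) * b r"] support vanish by simp
  show "(\<Sum>r\<in>{1..M}. (p ^ (r * s) - 1) * \<nu> r) = i + j - 1"
    using \<nu> sum_support_eq[of \<nu> M "\<lambda>r. (p ^ (r * s) - 1) * \<nu> r"] support by (simp add: nu_set_def)
qed

definition lagrange_terms :: "(nat \<times> (nat \<times> kernel_part \<Rightarrow> nat)) set" where
  "lagrange_terms = {(n, m). n < 2 * (i + j) \<and> m \<in> weak_compositions (kernel_index M) (Suc n) \<and>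
      (\<Sum>l\<in>kernel_index M. m l * kernel_wdeg p s l) = n \<and>
      (\<Sum>l\<in>kernel_index M. m l * kernel_xdeg p s l) = i \<and>
      (\<Sum>l\<in>kernel_index M. m l * kernel_ydeg p s l) = j \<and> m (0, Wpart) = 0}"

definition formula_terms ::
    "((nat \<Rightarrow> nat) \<times> (nat \<Rightarrow> nat) \<times> (nat \<Rightarrow> nat) \<times> (nat \<Rightarrow> nat)) set" where
  "formula_terms = Sigma (nu_set p s (i + j - 1)) (\<lambda>\<nu>. idx_set p s \<nu> i j)"

lemma lagrange_terms_facts:
  assumes "(n, m) \<in> lagrange_terms"
  shows "m \<in> weak_compositions (kernel_index M) (Suc n)"
    and "\<And>r t. r > M \<Longrightarrow> m (r, t) = 0"
    and "m (0, Wpart) = 0"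
    and "m (0, Xpart) + m (0, Ypart) + (\<Sum>r\<in>{1..M}. index_nu m r) = Suc n"
    and "m (0, Xpart) + (\<Sum>r\<in>{1..M}. p ^ (r * s) * m (r, Xpart)) = i"
    and "m (0, Ypart) + (\<Sum>r\<in>{1..M}. p ^ (r * s) * m (r, Ypart)) = j"
    and "(\<Sum>r\<in>{1..M}. p ^ (r * s) * m (r, Wpart)) = n"
    and "\<And>r. index_nu m r \<noteq> 0 \<Longrightarrow> r \<in> {1..M}"
proof -
  have m: "m \<in> weak_compositions (kernel_index M) (Suc n)"
    and wdeg: "(\<Sum>l\<in>kernel_index M. m l * kernel_wdeg p s l) = n"
    and xdeg: "(\<Sum>l\<in>kernel_index M. m l * kernel_xdeg p s l) = i"
    and ydeg: "(\<Sum>l\<in>kernel_index M. m l * kernel_ydeg p s l) = j"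
    and m0: "m (0, Wpart) = 0"
    using assms by (auto simp: lagrange_terms_def)
  show "m \<in> weak_compositions (kernel_index M) (Suc n)" "m (0, Wpart) = 0"
    by (fact m m0)+
  show outside: "\<And>r t. r > M \<Longrightarrow> m (r, t) = 0"
    using m by (auto simp: weak_compositions_def kernel_index_def)
  have "Suc n = (\<Sum>r\<le>M. m (r, Xpart) + m (r, Ypart) + m (r, Wpart))"
    using m by (simp add: weak_compositions_def sum_kernel_index)
  then show "m (0, Xpart) + m (0, Ypart) + (\<Sum>r\<in>{1..M}. index_nu m r) = Suc n"
    using m0 by (simp add: atMost_eq_insert_0 index_nu_def)
  show "m (0, Xpart) + (\<Sum>r\<in>{1..M}. p ^ (r * s) * m (r, Xpart)) = i"
    using xdeg by (simp add: sum_kernel_index atMost_eq_insert_0 mult.commute)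
  show "m (0, Ypart) + (\<Sum>r\<in>{1..M}. p ^ (r * s) * m (r, Ypart)) = j"
    using ydeg by (simp add: sum_kernel_index atMost_eq_insert_0 mult.commute)
  show "(\<Sum>r\<in>{1..M}. p ^ (r * s) * m (r, Wpart)) = n"
    using wdeg m0 by (simp add: sum_kernel_index atMost_eq_insert_0 mult.commute)
  show "r \<in> {1..M}" if "index_nu m r \<noteq> 0" for r
  proof -
    have "r \<noteq> 0" using that unfolding index_nu_def by (cases "r = 0") simp_all
    moreover have "r \<le> M"
    proof (rule ccontr)
      assume "\<not> r \<le> M"
      then show False using that outside[of r] by (simp add: index_nu_def)
    qed
    ultimately show ?thesis by simp
  qed
qed

text \<open>Counting the total degree of a term in two ways: \<open>i + j + \<Sum> q\<^sub>r k\<^sub>r\<close> (the \<open>x\<close>-, \<open>y\<close>- and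
  \<open>w\<close>-degrees) equals \<open>\<Sum> (q\<^sub>r - 1) \<nu>\<^sub>r\<close> plus the number of chosen summands.\<close>
lemma degree_balance:
  assumes "\<And>r. r \<in> {1..M} \<Longrightarrow> a r + b r + c r = \<nu> r"
  shows "(\<Sum>r\<in>{1..M}. p ^ (r * s) * a r) + (\<Sum>r\<in>{1..M}. p ^ (r * s) * b r) + (\<Sum>r\<in>{1..M}. p ^ (r * s) * c r) =
         (\<Sum>r\<in>{1..M}. (p ^ (r * s) - 1) * \<nu> r) + (\<Sum>r\<in>{1..M}. \<nu> r)"
proof -
  have "(p ^ (r * s) - 1) * \<nu> r + \<nu> r = p ^ (r * s) * a r + p ^ (r * s) * b r + p ^ (r * s) * c r" if "r \<in> {1..M}" for r
  proof -
    have "(p ^ (r * s) - 1) * \<nu> r + \<nu> r = p ^ (r * s) * \<nu> r"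
      using p by (cases "p ^ (r * s)") simp_all
    also have "\<dots> = p ^ (r * s) * a r + p ^ (r * s) * b r + p ^ (r * s) * c r"
      by (simp add: assms[OF that, symmetric] algebra_simps)
    finally show ?thesis .
  qed
  then show ?thesis
    by (simp only: sum.distrib[symmetric]) (rule sum.cong[OF refl, symmetric])
qed

lemma split_index_in_formula_terms:
  assumes "(n, m) \<in> lagrange_terms" shows "split_index m \<in> formula_terms"
proof -
  note F = lagrange_terms_facts[OF assms]
  have parts: "r \<in> {1..M} \<Longrightarrow> m (r, Xpart) + m (r, Ypart) + m (r, Wpart) = index_nu m r" for r
    by (simp add: index_nu_def)
  have vanish: "r \<in> {1..M} \<Longrightarrow> index_nu m r = 0 \<Longrightarrow>
      m (r, Xpart) = 0 \<and> m (r, Ypart) = 0 \<and> m (r, Wpart) = 0" for r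
    by (simp add: index_nu_def)
  have fin: "finite {r. index_nu m r \<noteq> 0}"
    by (rule finite_subset[of _ "{1..M}"]) (use F(8) in auto)
  have "(\<Sum>r\<in>{1..M}. (p ^ (r * s) - 1) * index_nu m r) = i + j - 1"
    using degree_balance[of "\<lambda>r. m (r, Xpart)" "\<lambda>r. m (r, Ypart)" "\<lambda>r. m (r, Wpart)", OF parts]
      F(4-7) by linarith
  then have "index_nu m \<in> nu_set p s (i + j - 1)"
    using fin sum_support_eq[of "index_nu m" M "\<lambda>r. (p ^ (r * s) - 1) * index_nu m r"] F(8)
    by (simp add: nu_set_def index_nu_def)
  moreover have "(\<Sum>r\<in>{r. index_nu m r \<noteq> 0}. p ^ (r * s) * m (r, t)) = (\<Sum>r\<in>{1..M}. p ^ (r * s) * m (r, t))"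
    if "t \<noteq> Wpart" for t
    by (rule sum_support_eq) (use F(8) vanish that in \<open>auto intro: kernel_part.exhaust[of t]\<close>)
  then have "(\<lambda>r. m (r, Xpart), \<lambda>r. m (r, Ypart), \<lambda>r. m (r, Wpart)) \<in> idx_set p s (index_nu m) i j"
    using F(3,5,6) unfolding idx_set_def by (simp add: index_nu_def)
  ultimately show ?thesis by (simp add: formula_terms_def split_index_def)
qed

definition lagrange_of_formula ::
    "(nat \<Rightarrow> nat) \<times> (nat \<Rightarrow> nat) \<times> (nat \<Rightarrow> nat) \<times> (nat \<Rightarrow> nat) \<Rightarrow> nat \<times> (nat \<times> kernel_part \<Rightarrow> nat)"
  where "lagrange_of_formula = (\<lambda>(\<nu>, a, b, c). ((\<Sum>r\<le>M. a r + b r + c r) - 1, join_index M a b c))"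

lemma lagrange_of_formula_split_index:
  assumes "(n, m) \<in> lagrange_terms" shows "lagrange_of_formula (split_index m) = (n, m)"
proof -
  note F = lagrange_terms_facts[OF assms]
  have "join_index M (\<lambda>r. m (r, Xpart)) (\<lambda>r. m (r, Ypart)) (\<lambda>r. m (r, Wpart)) = m"
  proof
    fix l :: "nat \<times> kernel_part"
    show "join_index M (\<lambda>r. m (r, Xpart)) (\<lambda>r. m (r, Ypart)) (\<lambda>r. m (r, Wpart)) l = m l"
      using F(2) by (cases l; cases "snd l") (auto simp: join_index_def not_le)
  qed
  moreover have "(\<Sum>r\<le>M. m (r, Xpart) + m (r, Ypart) + m (r, Wpart)) = Suc n"
    using F(1) by (simp add: weak_compositions_def sum_kernel_index)
  ultimately show ?thesis by (simp add: lagrange_of_formula_def split_index_def)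
qed

lemma lagrange_of_formula_in_lagrange_terms:
  assumes "x \<in> formula_terms"
  shows "lagrange_of_formula x \<in> lagrange_terms" and "split_index (snd (lagrange_of_formula x)) = x"
proof -
  obtain \<nu> a b c where x: "x = (\<nu>, a, b, c)" by (cases x) auto
  have \<nu>: "\<nu> \<in> nu_set p s (i + j - 1)" and abc: "(a, b, c) \<in> idx_set p s \<nu> i j"
    using assms x by (auto simp: formula_terms_def)
  note F = formula_index_facts[OF \<nu> abc]
  define N where "N = (\<Sum>r\<le>M. a r + b r + c r)"
  define m where "m = join_index M a b c"
  have N: "N = a 0 + b 0 + (\<Sum>r\<in>{1..M}. \<nu> r)"
    unfolding N_def using F(2,4) by (simp add: atMost_eq_insert_0)
  have wdeg_N: "(\<Sum>r\<in>{1..M}. p ^ (r * s) * c r) + 1 = N"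
    using degree_balance[of a b c \<nu>, OF F(4)] F(5-7) N ij by linarith
  have xdeg: "(\<Sum>l\<in>kernel_index M. m l * kernel_xdeg p s l) = i"
    and ydeg: "(\<Sum>l\<in>kernel_index M. m l * kernel_ydeg p s l) = j"
    and wdeg: "(\<Sum>l\<in>kernel_index M. m l * kernel_wdeg p s l) = N - 1"
    and size: "(\<Sum>l\<in>kernel_index M. m l) = Suc (N - 1)"
    unfolding m_def sums_join_index using F(2,5,6) wdeg_N N_def
    by (simp_all add: atMost_eq_insert_0)
  have m0: "m (0, Wpart) = 0" using F(2) by (simp add: m_def join_index_def)
  have "Suc (N - 1) < 2 * (i + j)"
    by (rule kernel_index_size_bound[OF p s m0 size wdeg xdeg ydeg])
  moreover have "m \<in> weak_compositions (kernel_index M) (Suc (N - 1))"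
    using size by (simp add: weak_compositions_def m_def join_index_outside)
  ultimately show "lagrange_of_formula x \<in> lagrange_terms"
    using xdeg ydeg wdeg m0
    by (simp add: lagrange_terms_def lagrange_of_formula_def x N_def[symmetric] m_def[symmetric])
  have "index_nu m r = \<nu> r" for r
  proof (cases "r = 0 \<or> r > M")
    case True
    then have "\<nu> r = 0" using F(3) nu_set_support[OF \<nu>, of r] by fastforce
    with True show ?thesis by (auto simp: index_nu_def m_def join_index_def)
  next
    case False
    then show ?thesis using F(4)[of r] by (simp add: index_nu_def m_def join_index_def)
  qed
  moreover have "(\<lambda>r. m (r, Xpart)) = a" "(\<lambda>r. m (r, Ypart)) = b" "(\<lambda>r. m (r, Wpart)) = c"
    using F(1) by (auto simp: m_def join_index_def fun_eq_iff not_le)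
  ultimately show "split_index (snd (lagrange_of_formula x)) = x"
    by (simp add: split_index_def lagrange_of_formula_def x m_def fun_eq_iff)
qed

lemma lagrange_term_eq_term_G:
  assumes nm: "(n, m) \<in> lagrange_terms"
  shows "of_nat (multinomial_coeff (kernel_index M) m) * (\<Prod>l\<in>kernel_index M. kernel_coeff p l ^ m l)
           / of_nat (Suc n) = term_G p (index_nu m) (\<lambda>r. m (r, Xpart)) (\<lambda>r. m (r, Ypart)) (\<lambda>r. m (r, Wpart))"
proof -
  note F = lagrange_terms_facts[OF nm]
  have vanish: "r \<in> {1..M} \<Longrightarrow> index_nu m r = 0 \<Longrightarrow>
      m (r, Xpart) = 0 \<and> m (r, Ypart) = 0 \<and> m (r, Wpart) = 0" for r
    by (simp add: index_nu_def)
  define K where "K = (\<Sum>r\<in>{1..M}. m (r, Wpart))"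
  define E where "E = (\<Sum>r\<in>{1..M}. r * index_nu m r)"
  define P where "P = (\<Prod>r\<in>{1..M}. fact (m (r, Xpart)) * fact (m (r, Ypart)) * fact (m (r, Wpart)) :: nat)"
  have "(\<Sum>r\<in>{r. index_nu m r \<noteq> 0}. m (r, Xpart) + m (r, Ypart) + m (r, Wpart)) =
        (\<Sum>r\<in>{1..M}. m (r, Xpart) + m (r, Ypart) + m (r, Wpart))"
    by (rule sum_support_eq) (use F(8) vanish in auto)
  also have "\<dots> = (\<Sum>r\<in>{1..M}. index_nu m r)"
    by (rule sum.cong) (auto simp: index_nu_def)
  finally have count: "m (0, Xpart) + m (0, Ypart) +
      (\<Sum>r\<in>{r. index_nu m r \<noteq> 0}. m (r, Xpart) + m (r, Ypart) + m (r, Wpart)) - 1 = n"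
    using F(4) by simp
  have K: "(\<Sum>r\<in>{r. index_nu m r \<noteq> 0}. m (r, Wpart)) = K"
    unfolding K_def by (rule sum_support_eq) (use F(8) vanish in auto)
  have E: "(\<Sum>r\<in>{r. index_nu m r \<noteq> 0}. r * index_nu m r) = E"
    unfolding E_def by (rule sum_support_eq) (use F(8) in auto)
  have P: "(\<Prod>r\<in>{r. index_nu m r \<noteq> 0}. fact (m (r, Xpart)) * fact (m (r, Ypart)) * fact (m (r, Wpart))) = P"
    unfolding P_def by (rule prod_support_eq) (use F(8) vanish in auto)
  have "term_G p (index_nu m) (\<lambda>r. m (r, Xpart)) (\<lambda>r. m (r, Ypart)) (\<lambda>r. m (r, Wpart)) =
      (-1) ^ K * fact n / (of_nat (fact (m (0, Xpart)) * fact (m (0, Ypart)) * P) * of_nat p ^ E)"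
    unfolding term_G_def Let_def count K E P by (simp add: of_nat_fact)
  moreover have "(\<Prod>l\<in>kernel_index M. kernel_coeff p l ^ m l) = (-1) ^ K / of_nat p ^ E"
    unfolding K_def E_def by (rule prod_kernel_coeff_power[where m = m, OF F(3)])
  moreover have "(\<Sum>l\<in>kernel_index M. m l) = Suc n"
    using F(1) by (simp add: weak_compositions_def)
  moreover have "(\<Prod>l\<in>kernel_index M. fact (m l)) = fact (m (0, Xpart)) * fact (m (0, Ypart)) * P"
    using F(3) by (simp add: prod_kernel_index atMost_eq_insert_0 P_def)
  moreover have "c * f / D * (z / B) / c = z * f / (D * B)" if "c \<noteq> 0" for c f D z B :: rat
    using that by (simp add: field_simps)
  ultimately show ?thesis
    by (simp only: of_nat_multinomial_coeff[OF finite_kernel_index] fact_Suc of_nat_mult)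
qed

lemma alpha_formula_eq_sum_formula_terms:
  "alpha_formula p s i j = (\<Sum>(\<nu>, a, b, c)\<in>formula_terms. term_G p \<nu> a b c)"
proof -
  have "lagrange_terms \<subseteq> Sigma {..<2*(i+j)} (\<lambda>n. weak_compositions (kernel_index M) (Suc n))"
    by (auto simp: lagrange_terms_def)
  then have "finite lagrange_terms"
    by (rule finite_subset) (intro finite_SigmaI finite_weak_compositions finite_kernel_index finite_lessThan)
  moreover have "formula_terms \<subseteq> (\<lambda>(n, m). split_index m) ` lagrange_terms"
  proof
    fix x assume "x \<in> formula_terms"
    from lagrange_of_formula_in_lagrange_terms[OF this] show "x \<in> (\<lambda>(n, m). split_index m) ` lagrange_terms"
      by (intro image_eqI[of _ _ "lagrange_of_formula x"]) (simp_all add: split_def)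
  qed
  ultimately have "finite formula_terms" by (rule finite_surj)
  moreover have "idx_set p s \<nu> i j \<subseteq> snd ` formula_terms" if "\<nu> \<in> nu_set p s (i + j - 1)" for \<nu>
    using that by (auto simp: formula_terms_def image_iff)
  ultimately have "finite (idx_set p s \<nu> i j)" if "\<nu> \<in> nu_set p s (i + j - 1)" for \<nu>
    using that finite_subset by blast
  then show ?thesis unfolding alpha_formula_def formula_terms_def
    by (subst sum.Sigma[OF finite_nu_set]) (simp_all add: split_def)
qed

lemma sum_lagrange_terms_eq_alpha_formula:
  "(\<Sum>(n, m)\<in>lagrange_terms. case split_index m of (\<nu>, a, b, c) \<Rightarrow> term_G p \<nu> a b c) =
   alpha_formula p s i j"
proof -
  have "(\<Sum>(n, m)\<in>lagrange_terms. case split_index m of (\<nu>, a, b, c) \<Rightarrow> term_G p \<nu> a b c) =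
        (\<Sum>(\<nu>, a, b, c)\<in>formula_terms. term_G p \<nu> a b c)"
  proof (rule sum.reindex_bij_witness[where i = lagrange_of_formula and j = "\<lambda>(n, m). split_index m"])
    fix x assume "x \<in> formula_terms"
    then show "lagrange_of_formula x \<in> lagrange_terms"
      and "(case lagrange_of_formula x of (n, m) \<Rightarrow> split_index m) = x"
      using lagrange_of_formula_in_lagrange_terms by (simp_all add: case_prod_unfold)
  qed (auto simp: lagrange_of_formula_split_index split_index_in_formula_terms)
  also have "\<dots> = alpha_formula p s i j"
    by (rule alpha_formula_eq_sum_formula_terms[symmetric])
  finally show ?thesis .
qed

lemma bcoeff_subst_t_one_kernel_solution:
  assumes W0: "W $ 0 = 0" and W: "W = fps_X * (fgl_kernel p s M oo W)"
  shows "bcoeff (subst_t_one W) i j = alpha_formula p s i j"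
proof -
  define g where "g n m = (if (\<Sum>l\<in>kernel_index M. m l * kernel_wdeg p s l) = n \<and>
      (\<Sum>l\<in>kernel_index M. m l * kernel_xdeg p s l) = i \<and>
      (\<Sum>l\<in>kernel_index M. m l * kernel_ydeg p s l) = j
    then of_nat (multinomial_coeff (kernel_index M) m) *
         (\<Prod>l\<in>kernel_index M. kernel_coeff p l ^ m l) / of_nat (Suc n) else 0)" for n m
  let ?S = "Sigma {..<2*(i+j)} (\<lambda>n. weak_compositions (kernel_index M) (Suc n))"
  have "bcoeff (subst_t_one W) i j = (\<Sum>n<2*(i+j). bcoeff (W $ Suc n) i j)"
    unfolding bcoeff_subst_t_one using W0 by (simp add: sum.atMost_shift bcoeff_def)
  also have "\<dots> = (\<Sum>n<2*(i+j). \<Sum>m\<in>weak_compositions (kernel_index M) (Suc n). g n m)"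
    unfolding bcoeff_kernel_solution[OF p s W0 W] g_def ..
  also have "\<dots> = (\<Sum>(n, m)\<in>?S. g n m)"
    by (rule sum.Sigma) (auto intro: finite_weak_compositions)
  also have "\<dots> = (\<Sum>(n, m)\<in>lagrange_terms. g n m)"
  proof (rule sum.mono_neutral_right)
    show "finite ?S"
      by (intro finite_SigmaI finite_weak_compositions finite_kernel_index finite_lessThan)
    show "lagrange_terms \<subseteq> ?S" by (auto simp: lagrange_terms_def)
    show "\<forall>x\<in>?S - lagrange_terms. (case x of (n, m) \<Rightarrow> g n m) = 0"
    proof
      fix x assume "x \<in> ?S - lagrange_terms"
      then obtain n m where x: "x = (n, m)" and nm: "(n, m) \<in> ?S" "(n, m) \<notin> lagrange_terms"
        by (cases x) auto
      have "(0, Wpart) \<in> kernel_index M" by (simp add: kernel_index_def)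
      then have "m (0, Wpart) \<noteq> 0 \<Longrightarrow> (\<Prod>l\<in>kernel_index M. kernel_coeff p l ^ m l) = 0"
        by (intro prod_zero bexI[of _ "(0, Wpart)"]) auto
      with nm show "(case x of (n, m) \<Rightarrow> g n m) = 0" by (auto simp: x g_def lagrange_terms_def)
    qed
  qed
  also have "\<dots> = (\<Sum>(n, m)\<in>lagrange_terms. case split_index m of (\<nu>, a, b, c) \<Rightarrow> term_G p \<nu> a b c)"
  proof (intro sum.cong refl, clarify)
    fix n m assume "(n, m) \<in> lagrange_terms"
    with lagrange_term_eq_term_G[OF this] show "g n m = (case split_index m of (\<nu>, a, b, c) \<Rightarrow> term_G p \<nu> a b c)"
      by (simp add: g_def lagrange_terms_def split_index_def)
  qed
  also have "\<dots> = alpha_formula p s i j"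
    by (rule sum_lagrange_terms_eq_alpha_formula)
  finally show ?thesis .
qed

end

section \<open>The formal group law \<open>F\<^sub>G\<^sub>(\<^sub>s\<^sub>)\<close>\<close>

definition alpha_fgl :: "nat \<Rightarrow> nat \<Rightarrow> nat \<Rightarrow> nat \<Rightarrow> rat" where
  "alpha_fgl p s i j = (if i + j = 0 then 0 else alpha_formula p s i j)"

context
  fixes p s :: nat
  assumes p: "p \<ge> 2" and s: "s \<ge> 1"
begin

lemma glog_coeff_power: "glog_coeff p s (p ^ (r * s)) = 1 / of_nat p ^ r"
proof -
  have "p ^ (r * s) = p ^ (k * s) \<longleftrightarrow> k = r" for k
    using p s by (auto simp: power_inject_exp)
  then show ?thesis by (auto simp: glog_coeff_def)
qed

lemma sum_glog_coeff:
  assumes "n \<le> M"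
  shows "(\<Sum>r\<le>M. if n = p ^ (r * s) then 1 / of_nat p ^ r else 0) = glog_coeff p s n"
proof (cases "\<exists>k. n = p ^ (k * s)")
  case True
  then obtain k where k: "n = p ^ (k * s)" by blast
  have "k \<le> M" using exponent_less_power[OF p s, of k] k assms by simp
  moreover have "n = p ^ (r * s) \<longleftrightarrow> r = k" for r
    using p s k by (auto simp: power_inject_exp)
  ultimately show ?thesis using k by (simp add: glog_coeff_power)
qed (auto simp: glog_coeff_def)

lemma sum_glog_coeff_mult:
  assumes h: "\<And>n. n > d \<Longrightarrow> h n = 0" and "d \<le> M"
  shows "(\<Sum>n\<in>{0..d}. glog_coeff p s n * h n) = (\<Sum>r\<le>M. h (p ^ (r * s)) / of_nat p ^ r)"
proof -
  have "(\<Sum>n\<in>{0..d}. glog_coeff p s n * h n) =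
        (\<Sum>n\<in>{0..d}. \<Sum>r\<le>M. if n = p ^ (r * s) then h n / of_nat p ^ r else 0)"
  proof (intro sum.cong refl)
    fix n assume "n \<in> {0..d}"
    with \<open>d \<le> M\<close> have "glog_coeff p s n = (\<Sum>r\<le>M. if n = p ^ (r * s) then 1 / of_nat p ^ r else 0)"
      by (intro sum_glog_coeff[symmetric]) simp
    then show "glog_coeff p s n * h n = (\<Sum>r\<le>M. if n = p ^ (r * s) then h n / of_nat p ^ r else 0)"
      by (simp add: sum_distrib_right if_distrib[of "\<lambda>x. x * h n"] cong: if_cong)
  qed
  also have "\<dots> = (\<Sum>r\<le>M. \<Sum>n\<in>{0..d}. if n = p ^ (r * s) then h n / of_nat p ^ r else 0)"
    by (rule sum.swap)
  also have "\<dots> = (\<Sum>r\<le>M. h (p ^ (r * s)) / of_nat p ^ r)"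
    using h by (intro sum.cong refl) (auto simp: sum.delta' not_le)
  finally show ?thesis .
qed

lemma sum_glog_coeff_axes:
  assumes "i \<le> M" "j \<le> M"
  shows "(\<Sum>r\<le>M. ((if i = p ^ (r * s) \<and> j = 0 then 1 else 0) +
                   (if i = 0 \<and> j = p ^ (r * s) then 1 else 0)) / of_nat p ^ r) =
    (if j = 0 then glog_coeff p s i else 0) + (if i = 0 then glog_coeff p s j else 0)"
proof -
  have "(\<Sum>r\<le>M. (if i = p ^ (r * s) \<and> j = 0 then 1 else 0) / of_nat p ^ r) =
        (if j = 0 then glog_coeff p s i else 0)"
    and "(\<Sum>r\<le>M. (if i = 0 \<and> j = p ^ (r * s) then 1 else 0) / of_nat p ^ r) =
        (if i = 0 then glog_coeff p s j else 0)"
    using assms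
    by (simp_all add: sum_glog_coeff[symmetric] if_distrib[of "\<lambda>x. x / _"] cong: if_cong)
  then show ?thesis by (simp add: add_divide_distrib sum.distrib)
qed

lemma fgl_with_log_alpha_fgl: "fgl_with_log (glog_coeff p s) (alpha_fgl p s)"
  unfolding fgl_with_log_def
proof (intro conjI allI)
  show "alpha_fgl p s 0 0 = 0" by (simp add: alpha_fgl_def)
  fix i0 j0 :: nat
  \<comment> \<open>Truncating \<open>\<phi>\<close> and the logarithm at \<open>M\<close> is invisible in total degree \<open>\<le> i0 + j0\<close>.\<close>
  define M where "M = Suc (i0 + j0)"
  obtain W where W0: "W $ 0 = 0" and W: "W = fps_X * (fgl_kernel p s M oo W)"
    by (rule fixed_point_exists)
  define F where "F = subst_t_one W"
  have F0: "bcoeff F 0 0 = 0"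
    unfolding F_def by (rule bcoeff_subst_t_one_0[OF W0])
  have "agree_on_box i0 j0 (biv (alpha_fgl p s)) F"
    unfolding agree_on_box_def
  proof (intro allI impI)
    fix i j assume "i \<le> i0" "j \<le> j0"
    then have "i + j \<le> M" by (simp add: M_def)
    then show "bcoeff (biv (alpha_fgl p s)) i j = bcoeff F i j"
      using bcoeff_subst_t_one_kernel_solution[OF p s _ _ W0 W, of i j] F0
      by (cases "i + j = 0") (auto simp: alpha_fgl_def F_def)
  qed
  then have "bcoeff (biv (alpha_fgl p s) ^ n) i0 j0 = bcoeff (F ^ n) i0 j0" for n
    using agree_on_box_power unfolding agree_on_box_def by blast
  then have "comp_biv (glog_coeff p s) (alpha_fgl p s) i0 j0 =
      (\<Sum>n\<in>{0..i0+j0}. glog_coeff p s n * bcoeff (F ^ n) i0 j0)"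
    by (simp add: comp_biv_def flip: bcoeff_def)
  also have "\<dots> = (\<Sum>r\<le>M. bcoeff (F ^ (p ^ (r * s))) i0 j0 / of_nat p ^ r)"
    using vanishes_below_power[OF F0] unfolding vanishes_below_def
    by (intro sum_glog_coeff_mult) (simp_all add: M_def)
  also have "\<dots> = (\<Sum>r\<le>M. ((if i0 = p ^ (r * s) \<and> j0 = 0 then 1 else 0) +
                            (if i0 = 0 \<and> j0 = p ^ (r * s) then 1 else 0)) / of_nat p ^ r)"
    unfolding F_def by (rule kernel_solution_log_identity[OF p s W0 W])
  also have "\<dots> = (if j0 = 0 then glog_coeff p s i0 else 0) + (if i0 = 0 then glog_coeff p s j0 else 0)"
    by (rule sum_glog_coeff_axes) (simp_all add: M_def)
  finally show "comp_biv (glog_coeff p s) (alpha_fgl p s) i0 j0 =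
      (if j0 = 0 then glog_coeff p s i0 else 0) + (if i0 = 0 then glog_coeff p s j0 else 0)" .
qed

end

lemma diff_1_dvd_power_diff_1:
  fixes x :: nat shows "(x - 1) dvd (x ^ r - 1)"
proof (cases "x = 0")
  case False
  show ?thesis
  proof (induction r)
    case (Suc r)
    have "x ^ Suc r - 1 = x * (x ^ r - 1) + (x - 1)"
      using False by (simp add: algebra_simps diff_mult_distrib2)
    with Suc.IH show ?case by simp
  qed simp
qed (simp add: power_0_left)

lemma alpha_formula_eq_0:
  assumes "\<not> (p ^ s - 1) dvd (i + j - 1)"
  shows "alpha_formula p s i j = 0"
proof -
  have "(p ^ s - 1) dvd (p ^ (r * s) - 1) * \<nu> r" for r \<nu>
    using diff_1_dvd_power_diff_1[of "p ^ s" r] by (simp add: mult.commute[of r] power_mult)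
  then have dvd: "(p ^ s - 1) dvd (\<Sum>r\<in>{r. \<nu> r \<noteq> 0}. (p ^ (r * s) - 1) * \<nu> r)" for \<nu>
    by (simp add: dvd_sum)
  have "\<nu> \<notin> nu_set p s (i + j - 1)" for \<nu>
  proof
    assume "\<nu> \<in> nu_set p s (i + j - 1)"
    then have "(\<Sum>r\<in>{r. \<nu> r \<noteq> 0}. (p ^ (r * s) - 1) * \<nu> r) = i + j - 1"
      by (simp add: nu_set_def)
    with dvd[of \<nu>] assms show False by simp
  qed
  then have "nu_set p s (i + j - 1) = {}" by blast
  then show ?thesis by (simp add: alpha_formula_def)
qed

theorem proposition3p1:
  fixes p s :: nat and \<alpha> :: "nat \<Rightarrow> nat \<Rightarrow> rat"
  assumes "prime p" and "s \<ge> 1"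
    and "fgl_with_log (glog_coeff p s) \<alpha>"
  shows "(\<forall>i j. i + j \<ge> 1 \<longrightarrow> \<alpha> i j = alpha_formula p s i j) \<and>
         (\<forall>i j. i + j \<ge> 1 \<and> \<not> (p ^ s - 1) dvd (i + j - 1) \<longrightarrow> \<alpha> i j = 0)"
proof -
  have p: "p \<ge> 2" using assms(1) by (rule prime_ge_2_nat)
  have "glog_coeff p s 1 \<noteq> 0"
    using glog_coeff_power[OF p assms(2), of 0] by simp
  with assms(3) fgl_with_log_alpha_fgl[OF p assms(2)] have "\<alpha> = alpha_fgl p s"
    by (rule fgl_with_log_unique)
  then show ?thesis by (auto simp: alpha_fgl_def alpha_formula_eq_0)
qed

end
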